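(* Let $\mathfrak{q}$ be an $n\times n$ quantum parameter matrix over a field $k$ and $V$ an $n$-dimensional $k$-vector space with basis $v_1,\dots,v_n$. Then $$\mathrm{Aut}_{\mathrm{gr}}(S_{\mathfrak{q}}(V))\ \cong\ \Big(\prod_{B\in\mathcal{B}_{\mathfrak{q}}}\mathrm{GL}(V_B)\Big)\rtimes\mathrm{Stab}(\mathfrak{q}),$$ where $\mathrm{Stab}(\mathfrak{q})$ acts on $\prod_B\mathrm{GL}(V_B)$ by $h\mapsto\iota(\sigma)h\iota(\sigma)^{-1}$, i.e. the multiplication is $(g,\sigma)(h,\tau)=(g\,\iota(\sigma)h\iota(\sigma)^{-1},\sigma\tau)$.
   Context: Let $k$ be a field. An $n\times n$ quantum parameter matrix is a matrix $\mathfrak{q}=(q_{ij})$ over $k$ with $q_{ii}=1$ and $q_{ij}q_{ji}=1$ for all $i,j$. For $V$ with basis $v_1,\dots,v_n$, $S_{\mathfrak{q}}(V)$ is the $k$-algebra generated by $v_1,\dots,v_n$ with relations $v_jv_i=q_{ij}v_iv_j$, graded by $\deg v_i=1$; $\mathrm{Aut}_{\mathrm{gr}}(S_{\mathfrak{q}}(V))$ is its group of degree-preserving algebra automorphisms, regarded as a subgroup of $\mathrm{GL}(V)$ via restriction. $\mathcal{B}_{\mathfrak{q}}$ is the partition of $[n]=\{1,\dots,n\}$ with $i\sim j$ iff rows $i,j$ of $\mathfrak{q}$ are identical (its classes are the blocks). For $B\subseteq[n]$, $V_B=\mathrm{span}\{v_i:i\in B\}$, and $\mathrm{GL}(V_B)$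 is identified with the subgroup of $\mathrm{GL}(V)$ acting on $V_B$ and fixing $v_i$ for $i\notin B$. For $B,C\subseteq[n]$, $\mathfrak{q}_{BC}=(q_{ij})_{i\in B,j\in C}$. With $r=|\mathcal{B}_{\mathfrak{q}}|$, $\mathfrak{S}_r$ permutes the blocks and $\mathrm{Stab}(\mathfrak{q})=\{\sigma\in\mathfrak{S}_r:|\sigma(B)|=|B|\text{ and }\mathfrak{q}_{BC}=\mathfrak{q}_{\sigma(B)\sigma(C)}\text{ for all blocks }B,C\}$. For $\sigma\in\mathrm{Stab}(\mathfrak{q})$, $\iota(\sigma)$ is the unique invertible linear map on $V$ that permutes the basis vectors $v_i$, sends $V_B$ onto $V_{\sigma(B)}$ for each block $B$, and preserves the order $v_1<\dots<v_n$ within each block. *)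

theory Defs
  imports "Jordan_Normal_Form.Matrix" "HOL-Algebra.Group" "HOL-Combinatorics.Permutations"
begin

text \<open>Indices: the basis vectors v_1..v_n of the paper are indexed here by 0..n-1.
  Matrices of linear maps on V use the column convention: column j is the image of v_j.\<close>

definition qpm :: "nat \<Rightarrow> (nat \<Rightarrow> nat \<Rightarrow> 'k::field) \<Rightarrow> bool" where
  "qpm n q \<longleftrightarrow> (\<forall>i<n. q i i = 1) \<and> (\<forall>i<n. \<forall>j<n. q i j * q j i = 1)"

text \<open>An element is a finitely supported coefficient function on words over {0..<n}.\<close>
definition fa_carrier :: "nat \<Rightarrow> (nat list \<Rightarrow> 'k::field) set" where
  "fa_carrier n = {f. finite {w. f w \<noteq> 0} \<and> (\<forall>w. f w \<noteq> 0 \<longrightarrow> set w \<subseteq> {..<n})}"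

definition fa_mult :: "(nat list \<Rightarrow> 'k::field) \<Rightarrow> (nat list \<Rightarrow> 'k) \<Rightarrow> nat list \<Rightarrow> 'k" where
  "fa_mult f g w = (\<Sum>i\<le>length w. f (take i w) * g (drop i w))"

definition fa_one :: "nat list \<Rightarrow> 'k::field" where
  "fa_one w = (if w = [] then 1 else 0)"

definition fa_gen :: "nat \<Rightarrow> nat list \<Rightarrow> 'k::field" where
  "fa_gen i w = (if w = [i] then 1 else 0)"

definition fa_add :: "(nat list \<Rightarrow> 'k::field) \<Rightarrow> (nat list \<Rightarrow> 'k) \<Rightarrow> nat list \<Rightarrow> 'k" where
  "fa_add f g w = f w + g w"

definition fa_sub :: "(nat list \<Rightarrow> 'k::field) \<Rightarrow> (nat list \<Rightarrow> 'k) \<Rightarrow> nat list \<Rightarrow> 'k" where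
  "fa_sub f g w = f w - g w"

definition fa_smult :: "'k::field \<Rightarrow> (nat list \<Rightarrow> 'k) \<Rightarrow> nat list \<Rightarrow> 'k" where
  "fa_smult c f w = c * f w"

definition sq_rel :: "(nat \<Rightarrow> nat \<Rightarrow> 'k::field) \<Rightarrow> nat \<Rightarrow> nat \<Rightarrow> nat list \<Rightarrow> 'k" where
  "sq_rel q i j = fa_sub (fa_mult (fa_gen j) (fa_gen i)) (fa_smult (q i j) (fa_mult (fa_gen i) (fa_gen j)))"

inductive_set sq_ideal :: "nat \<Rightarrow> (nat \<Rightarrow> nat \<Rightarrow> 'k::field) \<Rightarrow> (nat list \<Rightarrow> 'k) set"
  for n q where
  zero: "(\<lambda>w. 0) \<in> sq_ideal n q"
| add: "x \<in> sq_ideal n q \<Longrightarrow> y \<in> sq_ideal n q \<Longrightarrow> fa_add x y \<in> sq_ideal n q"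
| gen: "a \<in> fa_carrier n \<Longrightarrow> b \<in> fa_carrier n \<Longrightarrow> i < n \<Longrightarrow> j < n \<Longrightarrow>
        fa_mult (fa_mult a (sq_rel q i j)) b \<in> sq_ideal n q"

definition fa_homog :: "nat \<Rightarrow> nat \<Rightarrow> (nat list \<Rightarrow> 'k::field) \<Rightarrow> bool" where
  "fa_homog n d f \<longleftrightarrow> f \<in> fa_carrier n \<and> (\<forall>w. f w \<noteq> 0 \<longrightarrow> length w = d)"

text \<open>A degree-preserving algebra automorphism of S_q(V) = k<v>/I, given by its action
  on representatives in the free algebra (everything modulo I).\<close>
definition is_graded_aut ::
  "nat \<Rightarrow> (nat \<Rightarrow> nat \<Rightarrow> 'k::field) \<Rightarrow> ((nat list \<Rightarrow> 'k) \<Rightarrow> (nat list \<Rightarrow> 'k)) \<Rightarrow> bool" where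
  "is_graded_aut n q \<phi> \<longleftrightarrow>
     (let C = fa_carrier n; I = sq_ideal n q in
       (\<forall>x\<in>C. \<phi> x \<in> C) \<and>
       (\<forall>x\<in>C. \<forall>y\<in>C. fa_sub x y \<in> I \<longrightarrow> fa_sub (\<phi> x) (\<phi> y) \<in> I) \<and>
       (\<forall>x\<in>C. \<forall>y\<in>C. fa_sub (\<phi> (fa_add x y)) (fa_add (\<phi> x) (\<phi> y)) \<in> I) \<and>
       (\<forall>c. \<forall>x\<in>C. fa_sub (\<phi> (fa_smult c x)) (fa_smult c (\<phi> x)) \<in> I) \<and>
       (\<forall>x\<in>C. \<forall>y\<in>C. fa_sub (\<phi> (fa_mult x y)) (fa_mult (\<phi> x) (\<phi> y)) \<in> I) \<and>
       fa_sub (\<phi> fa_one) fa_one \<in> I \<and>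
       (\<forall>d x. fa_homog n d x \<longrightarrow> (\<exists>y. fa_homog n d y \<and> fa_sub (\<phi> x) y \<in> I)) \<and>
       (\<forall>x\<in>C. \<forall>y\<in>C. fa_sub (\<phi> x) (\<phi> y) \<in> I \<longrightarrow> fa_sub x y \<in> I) \<and>
       (\<forall>y\<in>C. \<exists>x\<in>C. fa_sub (\<phi> x) y \<in> I))"

definition Aut_gr :: "nat \<Rightarrow> (nat \<Rightarrow> nat \<Rightarrow> 'k::field) \<Rightarrow> 'k mat set" where
  "Aut_gr n q = {g \<in> carrier_mat n n. \<exists>\<phi>. is_graded_aut n q \<phi> \<and>
      (\<forall>j<n. fa_sub (\<phi> (fa_gen j)) (\<lambda>w. \<Sum>i<n. g $$ (i, j) * fa_gen i w) \<in> sq_ideal n q)}"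

definition Aut_gr_group :: "nat \<Rightarrow> (nat \<Rightarrow> nat \<Rightarrow> 'k::field) \<Rightarrow> 'k mat monoid" where
  "Aut_gr_group n q = \<lparr>carrier = Aut_gr n q, mult = (*), one = 1\<^sub>m n\<rparr>"

definition blk :: "nat \<Rightarrow> (nat \<Rightarrow> nat \<Rightarrow> 'k) \<Rightarrow> nat \<Rightarrow> nat set" where
  "blk n q i = {j. j < n \<and> (\<forall>l<n. q i l = q j l)}"

definition blocks :: "nat \<Rightarrow> (nat \<Rightarrow> nat \<Rightarrow> 'k) \<Rightarrow> nat set set" where
  "blocks n q = blk n q ` {..<n}"

text \<open>GL(V_B) inside GL(V): invertible maps preserving V_B and fixing v_i for i not in B.\<close>
definition GL_on :: "nat \<Rightarrow> nat set \<Rightarrow> 'k::field mat set" where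
  "GL_on n B = {g \<in> carrier_mat n n. invertible_mat g \<and>
      (\<forall>j<n. j \<notin> B \<longrightarrow> col g j = unit_vec n j) \<and>
      (\<forall>j\<in>B. \<forall>i<n. g $$ (i, j) \<noteq> 0 \<longrightarrow> i \<in> B)}"

text \<open>The (internal) product of the commuting subgroups GL(V_B), B a block.\<close>
definition block_prod :: "nat \<Rightarrow> (nat \<Rightarrow> nat \<Rightarrow> 'k::field) \<Rightarrow> 'k mat set" where
  "block_prod n q = {g. \<exists>Bs f. distinct Bs \<and> set Bs = blocks n q \<and>
      (\<forall>B\<in>blocks n q. f B \<in> GL_on n B) \<and> g = foldr (\<lambda>B M. f B * M) Bs (1\<^sub>m n)}"

definition Stab :: "nat \<Rightarrow> (nat \<Rightarrow> nat \<Rightarrow> 'k) \<Rightarrow> (nat set \<Rightarrow> nat set) set" where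
  "Stab n q = {\<sigma>. \<sigma> permutes blocks n q \<and>
     (\<forall>B\<in>blocks n q. card (\<sigma> B) = card B) \<and>
     (\<forall>B\<in>blocks n q. \<forall>C\<in>blocks n q. \<forall>a<card B. \<forall>b<card C.
        q (sorted_list_of_set B ! a) (sorted_list_of_set C ! b) =
        q (sorted_list_of_set (\<sigma> B) ! a) (sorted_list_of_set (\<sigma> C) ! b))}"

text \<open>iota(sigma): the permutation matrix sending the a-th basis vector of block B
  (in increasing order; a = number of smaller elements of B) to the a-th basis vector of block sigma(B).\<close>
definition iota :: "nat \<Rightarrow> (nat \<Rightarrow> nat \<Rightarrow> 'k::field) \<Rightarrow> (nat set \<Rightarrow> nat set) \<Rightarrow> 'k mat" where
  "iota n q \<sigma> = mat n n (\<lambda>(r, c).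
     if r = sorted_list_of_set (\<sigma> (blk n q c)) ! card {x \<in> blk n q c. x < c}
     then 1 else 0)"

definition mat_inv :: "nat \<Rightarrow> 'k::field mat \<Rightarrow> 'k mat" where
  "mat_inv n M = (THE N. N \<in> carrier_mat n n \<and> M * N = 1\<^sub>m n \<and> N * M = 1\<^sub>m n)"

definition semidirect :: "nat \<Rightarrow> (nat \<Rightarrow> nat \<Rightarrow> 'k::field) \<Rightarrow> ('k mat \<times> (nat set \<Rightarrow> nat set)) monoid" where
  "semidirect n q = \<lparr>carrier = block_prod n q \<times> Stab n q,
     mult = (\<lambda>(g, \<sigma>) (h, \<tau>). (g * iota n q \<sigma> * h * mat_inv n (iota n q \<sigma>), \<sigma> \<circ> \<tau>)),
     one = (1\<^sub>m n, id)\<rparr>"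

end

theory Submission
  imports Defs "Jordan_Normal_Form.Determinant"
begin

text \<open>
  A graded automorphism of S_q(V) is determined by its restriction g to V, and g extends to one
  iff g is invertible and q-compatible: g_ai g_bj \<noteq> 0 implies q_ab = q_ij.
  If g is q-compatible, the substitution v_j \<mapsto> \<Sum>_i g_ij v_i maps every relation
  v_j v_i - q_ij v_i v_j into the span of the relations. Conversely, the linear functionals
  x \<mapsto> x_ab + q_ab x_ba (x_aa for a = b) vanish on the relation ideal; evaluating them on the images of the
  relations gives polynomial identities in the entries of g which, together with invertibility,
  force q-compatibility.

  An invertible q-compatible g maps each V_B into a single V_\<sigma>(B), where \<sigma> permutes the blocks,
  preserves their sizes (a nonzero term of det g matches the indices of B and \<sigma>(B)) and preserves q,
  so \<sigma> \<in> Stab(q). Then g \<iota>(\<sigma>)^-1 is block diagonal, i.e. lies in the product of the GL(V_B), and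
  g \<mapsto> (g \<iota>(\<sigma>)^-1, \<sigma>) is the isomorphism; it is multiplicative because \<sigma> is uniquely
  determined by g and \<iota> is a homomorphism.
\<close>

section \<open>Invertible matrices\<close>

lemma mat_mult_entry:
  assumes "A \<in> carrier_mat n n" "B \<in> carrier_mat n n" "a < n" "b < n"
  shows "(A * B) $$ (a, b) = (\<Sum>c<n. A $$ (a, c) * B $$ (c, b))"
  using assms by (simp add: scalar_prod_def atLeast0LessThan)

lemma mat_mult_entry_nonzero:
  fixes A B :: "'a::semiring_0 mat"
  assumes "A \<in> carrier_mat n n" "B \<in> carrier_mat n n" "a < n" "b < n" "(A * B) $$ (a, b) \<noteq> 0"
  obtains c where "c < n" "A $$ (a, c) \<noteq> 0" "B $$ (c, b) \<noteq> 0"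
proof (rule ccontr)
  assume "\<not> thesis"
  with that have "(\<Sum>c<n. A $$ (a, c) * B $$ (c, b)) = 0"
    by (intro sum.neutral ballI) (metis lessThan_iff mult_zero_left mult_zero_right)
  then show False using assms mat_mult_entry[OF assms(1-4)] by simp
qed

lemma mat_mult_assoc_cancel_right:
  fixes A B C :: "'a::semiring_1 mat"
  assumes "A \<in> carrier_mat n n" "B \<in> carrier_mat n n" "C \<in> carrier_mat n n" "B * C = 1\<^sub>m n"
  shows "A * B * C = A"
  using assms assoc_mult_mat[of A n n B n C n] right_mult_one_mat[of A n n] by simp

definition GL :: "nat \<Rightarrow> 'a::field mat set" where
  "GL n = {g \<in> carrier_mat n n. det g \<noteq> 0}"

lemma GL_carrier: "g \<in> GL n \<Longrightarrow> g \<in> carrier_mat n n"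
  by (simp add: GL_def)

lemma GL_mult: "f \<in> GL n \<Longrightarrow> g \<in> GL n \<Longrightarrow> f * g \<in> GL n"
  by (auto simp: GL_def det_mult)

lemma GL_one: "1\<^sub>m n \<in> GL n"
  by (simp add: GL_def)

lemma GL_if_right_inverse:
  assumes "g \<in> carrier_mat n n" "h \<in> carrier_mat n n" "g * h = 1\<^sub>m n"
  shows "g \<in> GL n"
proof -
  have "det g * det h = 1" using assms by (metis det_mult det_one)
  then show ?thesis using assms by (auto simp: GL_def)
qed

lemma GL_inverse:
  assumes g: "g \<in> GL n"
  obtains h where "h \<in> GL n" "g * h = 1\<^sub>m n" "h * g = 1\<^sub>m n"
proof -
  have gc: "g \<in> carrier_mat n n" and "det g \<noteq> 0" using g by (auto simp: GL_def)
  then have "g \<in> Units (ring_mat TYPE('a) n ())" by (rule det_non_zero_imp_unit)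
  then obtain h where h: "h \<in> carrier_mat n n" "h * g = 1\<^sub>m n" "g * h = 1\<^sub>m n"
    unfolding Units_def ring_mat_def by auto
  with GL_if_right_inverse[OF h(1) gc h(2)] that show thesis by blast
qed

lemma GL_iff_invertible_mat:
  assumes g: "g \<in> carrier_mat n n"
  shows "invertible_mat g \<longleftrightarrow> g \<in> GL n"
proof
  assume "invertible_mat g"
  then obtain h where h: "g * h = 1\<^sub>m n" "h * g = 1\<^sub>m (dim_row h)"
    using g unfolding invertible_mat_def inverts_mat_def by auto
  then have "h \<in> carrier_mat n n" using g
    by (metis carrier_matI index_mult_mat(2,3) index_one_mat(2,3) carrier_matD)
  then show "g \<in> GL n" using GL_if_right_inverse g h(1) by blast
next
  assume "g \<in> GL n"
  then obtain h where "h \<in> GL n" "g * h = 1\<^sub>m n" "h * g = 1\<^sub>m n" by (rule GL_inverse)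
  then show "invertible_mat g"
    using g unfolding invertible_mat_def inverts_mat_def by (auto simp: GL_def)
qed

lemma GL_row_nonzero:
  assumes "g \<in> GL n" "a < n"
  obtains c where "c < n" "g $$ (a, c) \<noteq> 0"
proof -
  obtain h where h: "h \<in> GL n" "g * h = 1\<^sub>m n" using assms(1) by (rule GL_inverse)
  then have "(g * h) $$ (a, a) \<noteq> 0" using assms by simp
  then show thesis
    using mat_mult_entry_nonzero[OF GL_carrier[OF assms(1)] GL_carrier[OF h(1)] assms(2) assms(2)] that
    by blast
qed

lemma GL_col_nonzero:
  assumes "g \<in> GL n" "i < n"
  obtains c where "c < n" "g $$ (c, i) \<noteq> 0"
proof -
  obtain h where h: "h \<in> GL n" "h * g = 1\<^sub>m n" using assms(1) by (rule GL_inverse)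
  then have "(h * g) $$ (i, i) \<noteq> 0" using assms by simp
  then show thesis
    using mat_mult_entry_nonzero[OF GL_carrier[OF h(1)] GL_carrier[OF assms(1)] assms(2) assms(2)] that
    by blast
qed

lemma GL_nonzero_transversal:
  assumes g: "g \<in> GL n"
  obtains p where "p permutes {0..<n}" "\<forall>i<n. g $$ (i, p i) \<noteq> 0"
proof (rule ccontr)
  assume "\<not> thesis"
  with that have "\<forall>p\<in>{p. p permutes {0..<n}}. \<exists>i<n. g $$ (i, p i) = 0" by blast
  then have "det g = 0"
    unfolding det_def'[OF GL_carrier[OF g]] by (intro sum.neutral ballI) (fastforce intro: prod_zero)
  then show False using g by (simp add: GL_def)
qed

definition diag_indicator :: "nat \<Rightarrow> (nat \<Rightarrow> bool) \<Rightarrow> 'a::semiring_1 mat" where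
  "diag_indicator n P = mat n n (\<lambda>(x, y). if x = y \<and> P x then 1 else 0)"

lemma diag_indicator_carrier: "diag_indicator n P \<in> carrier_mat n n"
  by (simp add: diag_indicator_def)

lemma diag_indicator_mult_entry:
  fixes A :: "'a::semiring_1 mat"
  assumes "A \<in> carrier_mat n n" "a < n" "b < n"
  shows "(diag_indicator n P * A) $$ (a, b) = (if P a then A $$ (a, b) else 0)"
    and "(A * diag_indicator n P) $$ (a, b) = (if P b then A $$ (a, b) else 0)"
proof -
  have "(diag_indicator n P * A) $$ (a, b) = (\<Sum>c<n. diag_indicator n P $$ (a, c) * A $$ (c, b))"
    by (rule mat_mult_entry[OF diag_indicator_carrier assms])
  also have "\<dots> = (\<Sum>c<n. if c = a then (if P a then A $$ (a, b) else 0) else 0)"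
    by (intro sum.cong) (use assms in \<open>auto simp: diag_indicator_def\<close>)
  finally show "(diag_indicator n P * A) $$ (a, b) = (if P a then A $$ (a, b) else 0)"
    using assms by simp
  have "(A * diag_indicator n P) $$ (a, b) = (\<Sum>c<n. A $$ (a, c) * diag_indicator n P $$ (c, b))"
    by (rule mat_mult_entry[OF assms(1) diag_indicator_carrier assms(2,3)])
  also have "\<dots> = (\<Sum>c<n. if c = b then (if P b then A $$ (a, b) else 0) else 0)"
    by (intro sum.cong) (use assms in \<open>auto simp: diag_indicator_def\<close>)
  finally show "(A * diag_indicator n P) $$ (a, b) = (if P b then A $$ (a, b) else 0)"
    using assms by simp
qed

text \<open>The hypothesis on the support of g says that g commutes the diagonal projections:
  diag_indicator n P * g = g * diag_indicator n Q. Conjugating by h gives the reverse relation.\<close>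
lemma support_compatible_inverse:
  fixes g h :: "'a::field mat"
  assumes g: "g \<in> carrier_mat n n" and h: "h \<in> carrier_mat n n"
    and gh: "g * h = 1\<^sub>m n" and hg: "h * g = 1\<^sub>m n"
    and supp: "\<And>a i. a < n \<Longrightarrow> i < n \<Longrightarrow> g $$ (a, i) \<noteq> 0 \<Longrightarrow> P a \<longleftrightarrow> Q i"
    and ia: "i < n" "a < n" "h $$ (i, a) \<noteq> 0"
  shows "Q i \<longleftrightarrow> P a"
proof -
  let ?P = "diag_indicator n P :: 'a mat" and ?Q = "diag_indicator n Q :: 'a mat"
  have D: "?P \<in> carrier_mat n n" "?Q \<in> carrier_mat n n" by (simp_all add: diag_indicator_carrier)
  have comm: "?P * g = g * ?Q"
  proof (rule eq_matI)
    fix x y assume "x < dim_row (g * ?Q)" "y < dim_col (g * ?Q)"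
    then have xy: "x < n" "y < n" using g D by auto
    show "(?P * g) $$ (x, y) = (g * ?Q) $$ (x, y)"
      unfolding diag_indicator_mult_entry[OF g xy] using supp[OF xy] by auto
  qed (use g D in auto)
  have "h * ?P = h * ?P * (g * h)" using gh h D by simp
  also have "\<dots> = h * (?P * g) * h" using g h D by (simp add: assoc_mult_mat[of _ n n _ n _ n])
  also have "\<dots> = (h * g) * ?Q * h" using g h D by (simp add: comm assoc_mult_mat[of _ n n _ n _ n])
  also have "\<dots> = ?Q * h" using hg h D by simp
  finally have "(h * ?P) $$ (i, a) = (?Q * h) $$ (i, a)" by simp
  then show ?thesis using ia h by (auto simp: diag_indicator_mult_entry split: if_splits)
qed

lemma mat_inv_eqI:
  assumes "M \<in> carrier_mat n n" "N \<in> carrier_mat n n" "M * N = 1\<^sub>m n" "N * M = 1\<^sub>m n"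
  shows "mat_inv n M = N"
  unfolding mat_inv_def
proof (rule the_equality)
  fix N' assume N': "N' \<in> carrier_mat n n \<and> M * N' = 1\<^sub>m n \<and> N' * M = 1\<^sub>m n"
  have "N' = N' * (M * N)" using assms N' right_mult_one_mat[of N' n n] by simp
  also have "\<dots> = (N' * M) * N" using assms N' by (metis assoc_mult_mat)
  finally show "N' = N" using N' assms by simp
qed (use assms in simp)

section \<open>Blocks and the permutation matrices iota\<close>

lemma card_less_sorted_list_of_set_nth:
  assumes "finite S" "k < card S"
  shows "card {x\<in>S. x < sorted_list_of_set S ! k} = k"
proof -
  let ?xs = "sorted_list_of_set S"
  have sorted: "sorted_wrt (<) ?xs" and len: "length ?xs = card S" by simp_all
  have "{x\<in>S. x < ?xs ! k} = set (take k ?xs)"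
  proof (intro equalityI subsetI)
    fix x assume "x \<in> {x\<in>S. x < ?xs ! k}"
    then have x: "x \<in> set ?xs" "x < ?xs ! k" using assms by auto
    then obtain j where j: "j < length ?xs" "?xs ! j = x" by (auto simp: in_set_conv_nth)
    have "j < k"
    proof (rule ccontr)
      assume "\<not> j < k"
      then have "?xs ! k \<le> ?xs ! j"
        using sorted_wrt_nth_less[OF sorted, of k j] j(1) by (cases "k = j") auto
      then show False using j x by simp
    qed
    then show "x \<in> set (take k ?xs)" using j by (auto simp: in_set_conv_nth intro!: exI[of _ j])
  next
    fix x assume "x \<in> set (take k ?xs)"
    then obtain j where j: "j < k" "?xs ! j = x" by (auto simp: in_set_conv_nth)
    then show "x \<in> {x\<in>S. x < ?xs ! k}"
      using sorted_wrt_nth_less[OF sorted j(1)] assms len nth_mem[of j ?xs] by auto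
  qed
  then show ?thesis using assms len by (simp add: distinct_card)
qed

lemma sorted_list_of_set_nth_card_less:
  assumes "finite S" "c \<in> S"
  shows "sorted_list_of_set S ! card {x\<in>S. x < c} = c"
proof -
  obtain j where j: "j < length (sorted_list_of_set S)" "sorted_list_of_set S ! j = c"
    using assms by (metis in_set_conv_nth set_sorted_list_of_set)
  then show ?thesis using card_less_sorted_list_of_set_nth[OF assms(1), of j] by simp
qed

lemma sorted_list_of_set_nth_mem:
  assumes "finite S" "k < card S"
  shows "sorted_list_of_set S ! k \<in> S"
  using assms by (metis length_sorted_list_of_set nth_mem set_sorted_list_of_set)

lemma card_less_lt_card:
  assumes "finite S" "c \<in> S"
  shows "card {x\<in>S. x < c} < card (S :: 'a::linorder set)"
  using assms by (intro psubset_card_mono) auto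

definition rows_eq :: "nat \<Rightarrow> (nat \<Rightarrow> nat \<Rightarrow> 'k) \<Rightarrow> nat \<Rightarrow> nat \<Rightarrow> bool" where
  "rows_eq n q i j \<longleftrightarrow> (\<forall>l<n. q i l = q j l)"

lemma mem_blk_iff: "j \<in> blk n q i \<longleftrightarrow> j < n \<and> rows_eq n q i j"
  by (auto simp: blk_def rows_eq_def)

lemma rows_eq_refl: "rows_eq n q i i"
  by (simp add: rows_eq_def)

lemma rows_eq_sym: "rows_eq n q i j \<Longrightarrow> rows_eq n q j i"
  by (simp add: rows_eq_def)

lemma rows_eq_trans: "rows_eq n q i j \<Longrightarrow> rows_eq n q j k \<Longrightarrow> rows_eq n q i k"
  by (simp add: rows_eq_def)

lemma blk_self: "c < n \<Longrightarrow> c \<in> blk n q c"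
  by (simp add: mem_blk_iff rows_eq_refl)

lemma blk_subset: "blk n q c \<subseteq> {..<n}"
  by (auto simp: mem_blk_iff)

lemma finite_blk: "finite (blk n q c)"
  using blk_subset by (rule finite_subset) simp

lemma blk_eq: "x \<in> blk n q c \<Longrightarrow> blk n q x = blk n q c"
  by (auto simp: mem_blk_iff rows_eq_def)

lemma blk_eq_iff: "x < n \<Longrightarrow> blk n q x = blk n q y \<longleftrightarrow> rows_eq n q y x"
  by (metis blk_eq mem_blk_iff blk_self)

lemma mem_blocks_iff: "B \<in> blocks n q \<longleftrightarrow> (\<exists>c<n. B = blk n q c)"
  by (auto simp: blocks_def)

lemma blk_in_blocks: "c < n \<Longrightarrow> blk n q c \<in> blocks n q"
  by (auto simp: mem_blocks_iff)

lemma finite_blocks: "finite (blocks n q)"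
  by (simp add: blocks_def)

lemma blocks_eq_blk: "B \<in> blocks n q \<Longrightarrow> x \<in> B \<Longrightarrow> B = blk n q x"
  by (metis blk_eq mem_blocks_iff)

lemma blocks_subset: "B \<in> blocks n q \<Longrightarrow> B \<subseteq> {..<n}"
  using blk_subset mem_blocks_iff by metis

lemma finite_block: "B \<in> blocks n q \<Longrightarrow> finite B"
  using finite_blk mem_blocks_iff by metis

lemma Union_blocks: "\<Union>(blocks n q) = {..<n}"
  using blk_self blocks_subset by (fastforce simp: mem_blocks_iff)

lemma q_cong_rows_eq:
  assumes "qpm n q" "i < n" "i' < n" "j < n" "j' < n" "rows_eq n q i i'" "rows_eq n q j j'"
  shows "q i j = q i' j'"
proof -
  have "q i' j * q j i' = 1" "q i' j' * q j' i' = 1" using assms by (auto simp: qpm_def)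
  moreover have "q j i' = q j' i'" using assms by (simp add: rows_eq_def)
  ultimately have "q i' j = q i' j'" by (metis mult_right_cancel one_neq_zero mult_zero_right)
  then show ?thesis using assms by (simp add: rows_eq_def)
qed

lemma Stab_permutes: "\<sigma> \<in> Stab n q \<Longrightarrow> \<sigma> permutes blocks n q"
  by (simp add: Stab_def)

lemma Stab_in_blocks: "\<sigma> \<in> Stab n q \<Longrightarrow> B \<in> blocks n q \<Longrightarrow> \<sigma> B \<in> blocks n q"
  by (auto simp: Stab_def permutes_in_image)

lemma Stab_comp:
  assumes s: "\<sigma> \<in> Stab n q" and t: "\<tau> \<in> Stab n q"
  shows "\<sigma> \<circ> \<tau> \<in> Stab n q"
proof -
  have "q (sorted_list_of_set B ! a) (sorted_list_of_set C ! b) =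
        q (sorted_list_of_set (\<sigma> (\<tau> B)) ! a) (sorted_list_of_set (\<sigma> (\<tau> C)) ! b)"
    if h: "B \<in> blocks n q" "C \<in> blocks n q" "a < card B" "b < card C" for B C a b
  proof -
    have "\<tau> B \<in> blocks n q" "\<tau> C \<in> blocks n q" "a < card (\<tau> B)" "b < card (\<tau> C)"
      using t h Stab_in_blocks[OF t] by (auto simp: Stab_def)
    then show ?thesis using s t h unfolding Stab_def by simp
  qed
  then show ?thesis
    using s t Stab_in_blocks[OF t] by (simp add: Stab_def permutes_compose)
qed

lemma Stab_inv:
  assumes s: "\<sigma> \<in> Stab n q"
  shows "inv_into UNIV \<sigma> \<in> Stab n q"
proof -
  have p: "\<sigma> permutes blocks n q" using s by (rule Stab_permutes)
  have inv_blocks: "inv_into UNIV \<sigma> B \<in> blocks n q" if "B \<in> blocks n q" for B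
    using permutes_in_image[OF permutes_inv[OF p]] that by simp
  have \<sigma>_inv: "\<sigma> (inv_into UNIV \<sigma> B) = B" for B
    using permutes_inverses(1)[OF p] .
  have card: "card (inv_into UNIV \<sigma> B) = card B" if "B \<in> blocks n q" for B
  proof -
    have "card (\<sigma> (inv_into UNIV \<sigma> B)) = card (inv_into UNIV \<sigma> B)"
      using s inv_blocks[OF that] by (simp add: Stab_def)
    then show ?thesis by (simp add: \<sigma>_inv)
  qed
  have "q (sorted_list_of_set B ! a) (sorted_list_of_set C ! b) =
        q (sorted_list_of_set (inv_into UNIV \<sigma> B) ! a) (sorted_list_of_set (inv_into UNIV \<sigma> C) ! b)"
    if h: "B \<in> blocks n q" "C \<in> blocks n q" "a < card B" "b < card C" for B C a b
  proof -
    have "a < card (inv_into UNIV \<sigma> B)" "b < card (inv_into UNIV \<sigma> C)" using card h by auto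
    then have "q (sorted_list_of_set (inv_into UNIV \<sigma> B) ! a) (sorted_list_of_set (inv_into UNIV \<sigma> C) ! b) =
        q (sorted_list_of_set (\<sigma> (inv_into UNIV \<sigma> B)) ! a) (sorted_list_of_set (\<sigma> (inv_into UNIV \<sigma> C)) ! b)"
      using s inv_blocks[OF h(1)] inv_blocks[OF h(2)] unfolding Stab_def by blast
    then show ?thesis by (simp add: \<sigma>_inv)
  qed
  then show ?thesis using permutes_inv[OF p] card by (simp add: Stab_def)
qed

text \<open>iota n q \<sigma> sends v_c to v_(iota_perm n q \<sigma> c), see iota_eq.\<close>
definition iota_perm :: "nat \<Rightarrow> (nat \<Rightarrow> nat \<Rightarrow> 'k) \<Rightarrow> (nat set \<Rightarrow> nat set) \<Rightarrow> nat \<Rightarrow> nat" where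
  "iota_perm n q \<sigma> c = sorted_list_of_set (\<sigma> (blk n q c)) ! card {x \<in> blk n q c. x < c}"

lemma iota_perm_mem:
  assumes s: "\<sigma> \<in> Stab n q" and c: "c < n"
  shows "iota_perm n q \<sigma> c \<in> \<sigma> (blk n q c)"
proof -
  have B: "blk n q c \<in> blocks n q" using c by (rule blk_in_blocks)
  have "card {x \<in> blk n q c. x < c} < card (\<sigma> (blk n q c))"
    using card_less_lt_card[OF finite_blk blk_self[OF c]] s B by (simp add: Stab_def)
  then show ?thesis
    unfolding iota_perm_def
    by (rule sorted_list_of_set_nth_mem[OF finite_block[OF Stab_in_blocks[OF s B]]])
qed

lemma blk_iota_perm:
  assumes "\<sigma> \<in> Stab n q" "c < n"
  shows "blk n q (iota_perm n q \<sigma> c) = \<sigma> (blk n q c)"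
  using blocks_eq_blk[OF Stab_in_blocks[OF assms(1) blk_in_blocks] iota_perm_mem[OF assms]] assms(2)
  by simp

lemma iota_perm_less:
  assumes "\<sigma> \<in> Stab n q" "c < n"
  shows "iota_perm n q \<sigma> c < n"
  using iota_perm_mem[OF assms] blocks_subset[OF Stab_in_blocks[OF assms(1) blk_in_blocks[OF assms(2)]]]
  by auto

lemma card_less_iota_perm:
  assumes s: "\<sigma> \<in> Stab n q" and c: "c < n"
  shows "card {x \<in> blk n q (iota_perm n q \<sigma> c). x < iota_perm n q \<sigma> c} = card {x \<in> blk n q c. x < c}"
proof -
  have B0: "blk n q c \<in> blocks n q" using c by (rule blk_in_blocks)
  have B: "\<sigma> (blk n q c) \<in> blocks n q" using Stab_in_blocks[OF s B0] .
  have "card {x \<in> blk n q c. x < c} < card (\<sigma> (blk n q c))"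
    using card_less_lt_card[OF finite_blk blk_self[OF c]] s B0 by (simp add: Stab_def)
  then show ?thesis
    unfolding blk_iota_perm[OF s c] unfolding iota_perm_def
    by (rule card_less_sorted_list_of_set_nth[OF finite_block[OF B]])
qed

lemma iota_perm_comp:
  assumes "\<sigma> \<in> Stab n q" "\<tau> \<in> Stab n q" "c < n"
  shows "iota_perm n q \<sigma> (iota_perm n q \<tau> c) = iota_perm n q (\<sigma> \<circ> \<tau>) c"
  using blk_iota_perm[OF assms(2,3)] card_less_iota_perm[OF assms(2,3)]
  unfolding iota_perm_def by simp

lemma iota_perm_id: "c < n \<Longrightarrow> iota_perm n q id c = c"
  unfolding iota_perm_def by (simp add: sorted_list_of_set_nth_card_less finite_blk blk_self)

lemma q_iota_perm:
  assumes s: "\<sigma> \<in> Stab n q" and c: "c < n" "d < n"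
  shows "q (iota_perm n q \<sigma> c) (iota_perm n q \<sigma> d) = q c d"
proof -
  let ?r = "\<lambda>e. card {x \<in> blk n q e. x < e}"
  have "?r c < card (blk n q c)" "?r d < card (blk n q d)"
    using card_less_lt_card[OF finite_blk blk_self] c by auto
  then have "q (sorted_list_of_set (blk n q c) ! ?r c) (sorted_list_of_set (blk n q d) ! ?r d) =
      q (sorted_list_of_set (\<sigma> (blk n q c)) ! ?r c) (sorted_list_of_set (\<sigma> (blk n q d)) ! ?r d)"
    using s blk_in_blocks[OF c(1)] blk_in_blocks[OF c(2)] unfolding Stab_def by blast
  then show ?thesis
    using c by (simp add: iota_perm_def sorted_list_of_set_nth_card_less finite_blk blk_self)
qed

lemma iota_eq: "iota n q \<sigma> = mat n n (\<lambda>(r, c). if r = iota_perm n q \<sigma> c then 1 else 0)"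
  unfolding iota_def iota_perm_def ..

lemma iota_carrier: "iota n q \<sigma> \<in> carrier_mat n n"
  by (simp add: iota_eq)

lemma mat_mult_iota_entry:
  assumes "\<sigma> \<in> Stab n q" "g \<in> carrier_mat n n" "a < n" "c < n"
  shows "(g * iota n q \<sigma>) $$ (a, c) = g $$ (a, iota_perm n q \<sigma> c)"
proof -
  have "(g * iota n q \<sigma>) $$ (a, c) = (\<Sum>m<n. g $$ (a, m) * iota n q \<sigma> $$ (m, c))"
    by (rule mat_mult_entry[OF assms(2) iota_carrier assms(3,4)])
  also have "\<dots> = (\<Sum>m<n. if m = iota_perm n q \<sigma> c then g $$ (a, m) else 0)"
    using assms(4) by (intro sum.cong) (auto simp: iota_eq)
  finally show ?thesis using iota_perm_less[OF assms(1,4)] by simp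
qed

lemma iota_comp:
  assumes "\<sigma> \<in> Stab n q" "\<tau> \<in> Stab n q"
  shows "iota n q \<sigma> * iota n q \<tau> = iota n q (\<sigma> \<circ> \<tau>)"
proof (rule eq_matI)
  fix r c assume "r < dim_row (iota n q (\<sigma> \<circ> \<tau>))" "c < dim_col (iota n q (\<sigma> \<circ> \<tau>))"
  then have rc: "r < n" "c < n" by (auto simp: iota_eq)
  have "(iota n q \<sigma> * iota n q \<tau>) $$ (r, c) = iota n q \<sigma> $$ (r, iota_perm n q \<tau> c)"
    by (rule mat_mult_iota_entry[OF assms(2) iota_carrier rc])
  also have "\<dots> = iota n q (\<sigma> \<circ> \<tau>) $$ (r, c)"
    using iota_perm_less[OF assms(2) rc(2)] rc by (simp add: iota_eq iota_perm_comp[OF assms rc(2)])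
  finally show "(iota n q \<sigma> * iota n q \<tau>) $$ (r, c) = iota n q (\<sigma> \<circ> \<tau>) $$ (r, c)" .
qed (auto simp: iota_eq)

lemma iota_id: "iota n q id = 1\<^sub>m n"
  by (rule eq_matI) (auto simp: iota_eq iota_perm_id)

lemma iota_inv:
  assumes "\<sigma> \<in> Stab n q"
  shows "iota n q \<sigma> * iota n q (inv_into UNIV \<sigma>) = 1\<^sub>m n" "iota n q (inv_into UNIV \<sigma>) * iota n q \<sigma> = 1\<^sub>m n"
  using iota_comp[OF assms Stab_inv[OF assms]] iota_comp[OF Stab_inv[OF assms] assms] iota_id
    permutes_inverses[OF Stab_permutes[OF assms]] by (simp_all add: comp_def id_def)

lemma mat_inv_iota: "\<sigma> \<in> Stab n q \<Longrightarrow> mat_inv n (iota n q \<sigma>) = iota n q (inv_into UNIV \<sigma>)"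
  by (rule mat_inv_eqI) (auto simp: iota_carrier iota_inv)

lemma iota_GL: "\<sigma> \<in> Stab n q \<Longrightarrow> iota n q \<sigma> \<in> GL n"
  using GL_if_right_inverse[OF iota_carrier iota_carrier iota_inv(1)] .

section \<open>q-compatible matrices and their block decomposition\<close>

definition q_compatible :: "nat \<Rightarrow> (nat \<Rightarrow> nat \<Rightarrow> 'k) \<Rightarrow> 'k::zero mat \<Rightarrow> bool" where
  "q_compatible n q g \<longleftrightarrow>
     (\<forall>a<n. \<forall>i<n. \<forall>b<n. \<forall>j<n. g $$ (a, i) \<noteq> 0 \<longrightarrow> g $$ (b, j) \<noteq> 0 \<longrightarrow> q a b = q i j)"

definition GL_q :: "nat \<Rightarrow> (nat \<Rightarrow> nat \<Rightarrow> 'k) \<Rightarrow> 'k::field mat set" where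
  "GL_q n q = {g \<in> GL n. q_compatible n q g}"

lemma q_compatibleD:
  assumes "q_compatible n q g" "a < n" "i < n" "b < n" "j < n" "g $$ (a, i) \<noteq> 0" "g $$ (b, j) \<noteq> 0"
  shows "q a b = q i j"
  using assms unfolding q_compatible_def by blast

lemma GL_qD:
  assumes "g \<in> GL_q n q" "a < n" "i < n" "b < n" "j < n" "g $$ (a, i) \<noteq> 0" "g $$ (b, j) \<noteq> 0"
  shows "q a b = q i j"
  using assms q_compatibleD unfolding GL_q_def by blast

lemma GL_q_GL: "g \<in> GL_q n q \<Longrightarrow> g \<in> GL n"
  by (simp add: GL_q_def)

lemma GL_q_rows_eq_iff:
  assumes g: "g \<in> GL_q n q" and idx: "a < n" "i < n" "b < n" "j < n"
    and nz: "g $$ (a, i) \<noteq> 0" "g $$ (b, j) \<noteq> 0"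
  shows "rows_eq n q a b \<longleftrightarrow> rows_eq n q i j"
proof
  assume ab: "rows_eq n q a b"
  show "rows_eq n q i j" unfolding rows_eq_def
  proof (intro allI impI)
    fix l assume l: "l < n"
    obtain c where c: "c < n" "g $$ (c, l) \<noteq> 0" using GL_col_nonzero[OF GL_q_GL[OF g] l] .
    have "q i l = q a c" "q j l = q b c" using GL_qD[OF g] idx nz c l by metis+
    then show "q i l = q j l" using ab c by (simp add: rows_eq_def)
  qed
next
  assume ij: "rows_eq n q i j"
  show "rows_eq n q a b" unfolding rows_eq_def
  proof (intro allI impI)
    fix l assume l: "l < n"
    obtain m where m: "m < n" "g $$ (l, m) \<noteq> 0" using GL_row_nonzero[OF GL_q_GL[OF g] l] .
    have "q a l = q i m" "q b l = q j m" using GL_qD[OF g] idx nz m l by metis+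
    then show "q a l = q b l" using ij m by (simp add: rows_eq_def)
  qed
qed

lemma GL_q_mult:
  assumes g: "g \<in> GL_q n q" and h: "h \<in> GL_q n q"
  shows "g * h \<in> GL_q n q"
proof -
  have gc: "g \<in> carrier_mat n n" and hc: "h \<in> carrier_mat n n"
    using g h by (simp_all add: GL_q_def GL_carrier)
  have "q a b = q i j"
    if idx: "a < n" "i < n" "b < n" "j < n" and nz: "(g * h) $$ (a, i) \<noteq> 0" "(g * h) $$ (b, j) \<noteq> 0"
    for a i b j
  proof -
    obtain c where c: "c < n" "g $$ (a, c) \<noteq> 0" "h $$ (c, i) \<noteq> 0"
      using mat_mult_entry_nonzero[OF gc hc idx(1,2) nz(1)] .
    obtain d where d: "d < n" "g $$ (b, d) \<noteq> 0" "h $$ (d, j) \<noteq> 0"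
      using mat_mult_entry_nonzero[OF gc hc idx(3,4) nz(2)] .
    have "q a b = q c d" using GL_qD[OF g] idx c d by blast
    also have "\<dots> = q i j" using GL_qD[OF h] idx c d by blast
    finally show ?thesis .
  qed
  then show ?thesis using g h GL_mult by (auto simp: GL_q_def q_compatible_def)
qed

text \<open>By support_compatible_inverse, the entries of g^-1 link blocks exactly as those of g do in
  the other direction, so q-compatibility passes to the inverse.\<close>
lemma GL_q_inverse:
  assumes Q: "qpm n q" and g: "g \<in> GL_q n q"
    and h: "h \<in> carrier_mat n n" "g * h = 1\<^sub>m n" "h * g = 1\<^sub>m n"
  shows "h \<in> GL_q n q"
proof -
  have gc: "g \<in> carrier_mat n n" using g by (simp add: GL_q_def GL_carrier)
  have linked: "\<exists>i0<n. g $$ (a, i0) \<noteq> 0 \<and> rows_eq n q i0 i"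
    if ia: "i < n" "a < n" "h $$ (i, a) \<noteq> 0" for i a
  proof -
    obtain i0 where i0: "i0 < n" "g $$ (a, i0) \<noteq> 0" using GL_row_nonzero[OF GL_q_GL[OF g] ia(2)] .
    have "rows_eq n q i0 i \<longleftrightarrow> rows_eq n q a a"
      by (rule support_compatible_inverse[OF gc h _ ia, where P = "rows_eq n q a" and Q = "rows_eq n q i0"])
        (use GL_q_rows_eq_iff[OF g ia(2) i0(1)] i0 in auto)
    then show ?thesis using i0 rows_eq_refl by blast
  qed
  have "q i j = q a b"
    if idx: "i < n" "a < n" "j < n" "b < n" and nz: "h $$ (i, a) \<noteq> 0" "h $$ (j, b) \<noteq> 0" for i a j b
  proof -
    obtain i0 where i0: "i0 < n" "g $$ (a, i0) \<noteq> 0" "rows_eq n q i0 i" using linked idx nz by blast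
    obtain j0 where j0: "j0 < n" "g $$ (b, j0) \<noteq> 0" "rows_eq n q j0 j" using linked idx nz by blast
    have "q a b = q i0 j0" using GL_qD[OF g] idx i0 j0 by blast
    also have "\<dots> = q i j" by (rule q_cong_rows_eq[OF Q]) (use i0 j0 idx in auto)
    finally show ?thesis by simp
  qed
  moreover have "h \<in> GL n" using GL_if_right_inverse[OF h(1) gc h(3)] .
  ultimately show ?thesis by (auto simp: GL_q_def q_compatible_def)
qed

definition GL_block :: "nat \<Rightarrow> (nat \<Rightarrow> nat \<Rightarrow> 'k) \<Rightarrow> 'k::field mat set" where
  "GL_block n q = {f \<in> GL n. \<forall>a<n. \<forall>i<n. f $$ (a, i) \<noteq> 0 \<longrightarrow> a \<in> blk n q i}"

definition maps_blocks :: "nat \<Rightarrow> (nat \<Rightarrow> nat \<Rightarrow> 'k) \<Rightarrow> 'k::zero mat \<Rightarrow> (nat set \<Rightarrow> nat set) \<Rightarrow> bool" where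
  "maps_blocks n q g \<sigma> \<longleftrightarrow> (\<forall>a<n. \<forall>c<n. g $$ (a, c) \<noteq> 0 \<longrightarrow> a \<in> \<sigma> (blk n q c))"

text \<open>Outside the blocks block_image n q g is the identity, so that it can be a permutation of the
  blocks in the sense of permutes.\<close>
definition block_image :: "nat \<Rightarrow> (nat \<Rightarrow> nat \<Rightarrow> 'k) \<Rightarrow> 'k::zero mat \<Rightarrow> nat set \<Rightarrow> nat set" where
  "block_image n q g B = (if B \<in> blocks n q then {a. a < n \<and> (\<exists>i\<in>B. g $$ (a, i) \<noteq> 0)} else B)"

lemma block_image_blk:
  assumes g: "g \<in> GL_q n q" and c: "c < n" "a0 < n" "g $$ (a0, c) \<noteq> 0"
  shows "block_image n q g (blk n q c) = blk n q a0"
proof -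
  have "{a. a < n \<and> (\<exists>i\<in>blk n q c. g $$ (a, i) \<noteq> 0)} = blk n q a0"
  proof (intro equalityI subsetI)
    fix a assume "a \<in> {a. a < n \<and> (\<exists>i\<in>blk n q c. g $$ (a, i) \<noteq> 0)}"
    then obtain i where a: "a < n" "i < n" "rows_eq n q c i" "g $$ (a, i) \<noteq> 0"
      by (auto simp: mem_blk_iff)
    then show "a \<in> blk n q a0" using GL_q_rows_eq_iff[OF g c(2,1) a(1,2) c(3) a(4)] by (simp add: mem_blk_iff)
  next
    fix a assume "a \<in> blk n q a0"
    then have a: "a < n" "rows_eq n q a0 a" by (auto simp: mem_blk_iff)
    obtain m where m: "m < n" "g $$ (a, m) \<noteq> 0" using GL_row_nonzero[OF GL_q_GL[OF g] a(1)] .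
    have "rows_eq n q c m" using GL_q_rows_eq_iff[OF g c(2,1) a(1) m(1) c(3) m(2)] a by simp
    then show "a \<in> {a. a < n \<and> (\<exists>i\<in>blk n q c. g $$ (a, i) \<noteq> 0)}" using a m by (auto simp: mem_blk_iff)
  qed
  then show ?thesis using blk_in_blocks[OF c(1), of q] by (simp add: block_image_def)
qed

lemma block_image_blkE:
  assumes g: "g \<in> GL_q n q" and c: "c < n"
  obtains a0 where "a0 < n" "g $$ (a0, c) \<noteq> 0" "block_image n q g (blk n q c) = blk n q a0"
proof -
  obtain a0 where "a0 < n" "g $$ (a0, c) \<noteq> 0" using GL_col_nonzero[OF GL_q_GL[OF g] c] .
  with block_image_blk[OF g c] that show thesis by blast
qed

lemma block_image_in_blocks:
  assumes "g \<in> GL_q n q" "B \<in> blocks n q"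
  shows "block_image n q g B \<in> blocks n q"
  using assms by (auto simp: mem_blocks_iff elim: block_image_blkE)

lemma block_image_permutes:
  assumes g: "g \<in> GL_q n q"
  shows "block_image n q g permutes blocks n q"
proof -
  have inj: "inj_on (block_image n q g) (blocks n q)"
  proof (rule inj_onI)
    fix B C assume BC: "B \<in> blocks n q" "C \<in> blocks n q" "block_image n q g B = block_image n q g C"
    obtain c d where cd: "c < n" "d < n" "B = blk n q c" "C = blk n q d"
      using BC by (auto simp: mem_blocks_iff)
    obtain a0 where a0: "a0 < n" "g $$ (a0, c) \<noteq> 0" "block_image n q g B = blk n q a0"
      using block_image_blkE[OF g cd(1)] cd by metis
    obtain a1 where a1: "a1 < n" "g $$ (a1, d) \<noteq> 0" "block_image n q g C = blk n q a1"
      using block_image_blkE[OF g cd(2)] cd by metis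
    have "rows_eq n q a0 a1" using a0 a1 BC(3) blk_eq_iff rows_eq_sym by metis
    then have "rows_eq n q c d" using GL_q_rows_eq_iff[OF g a0(1) cd(1) a1(1) cd(2) a0(2) a1(2)] by simp
    then show "B = C" using cd blk_eq_iff rows_eq_sym by metis
  qed
  have "block_image n q g ` blocks n q = blocks n q"
    using endo_inj_surj[OF finite_blocks _ inj] block_image_in_blocks[OF g] by blast
  then show ?thesis
    using inj by (intro bij_imp_permutes) (auto simp: bij_betw_def block_image_def)
qed

text \<open>A nonzero transversal of g is a bijection of indices mapping each block onto its image block.\<close>
lemma card_block_image:
  assumes g: "g \<in> GL_q n q" and B: "B \<in> blocks n q"
  shows "card (block_image n q g B) = card B"
proof -
  obtain c where c: "c < n" "B = blk n q c" using B by (auto simp: mem_blocks_iff)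
  obtain a0 where a0: "a0 < n" "g $$ (a0, c) \<noteq> 0" "block_image n q g B = blk n q a0"
    using block_image_blkE[OF g c(1)] c by metis
  obtain p where p: "p permutes {0..<n}" "\<forall>i<n. g $$ (i, p i) \<noteq> 0"
    using GL_nonzero_transversal[OF GL_q_GL[OF g]] .
  have p_less: "p x < n \<longleftrightarrow> x < n" for x
    using permutes_in_image[OF p(1)] by simp
  have p_blk: "x \<in> blk n q a0 \<longleftrightarrow> p x \<in> blk n q c" if "x < n" for x
    using GL_q_rows_eq_iff[OF g a0(1) c(1) that _ a0(2)] p(2) p_less that
    by (simp add: mem_blk_iff)
  have "p ` blk n q a0 = blk n q c"
  proof (intro equalityI subsetI)
    fix y assume "y \<in> p ` blk n q a0"
    then show "y \<in> blk n q c" using p_blk by (auto simp: mem_blk_iff)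
  next
    fix y assume y: "y \<in> blk n q c"
    obtain x where "p x = y" using permutes_surj[OF p(1)] by (metis surj_def)
    then show "y \<in> p ` blk n q a0" using y p_blk p_less by (auto simp: mem_blk_iff)
  qed
  then show ?thesis
    using card_image[OF permutes_inj_on[OF p(1)]] a0 c by metis
qed

lemma q_block_image:
  assumes Q: "qpm n q" and g: "g \<in> GL_q n q"
    and h: "B \<in> blocks n q" "C \<in> blocks n q" "a < card B" "b < card C"
  shows "q (sorted_list_of_set B ! a) (sorted_list_of_set C ! b) =
    q (sorted_list_of_set (block_image n q g B) ! a) (sorted_list_of_set (block_image n q g C) ! b)"
proof -
  let ?x = "sorted_list_of_set B ! a" and ?y = "sorted_list_of_set C ! b"
  let ?x' = "sorted_list_of_set (block_image n q g B) ! a"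
    and ?y' = "sorted_list_of_set (block_image n q g C) ! b"
  have x: "?x \<in> B" "?y \<in> C"
    using sorted_list_of_set_nth_mem[OF finite_block] h by auto
  have xn: "?x < n" "?y < n" using x blocks_subset h by auto
  have x': "?x' \<in> block_image n q g B" "?y' \<in> block_image n q g C"
    using sorted_list_of_set_nth_mem[OF finite_block[OF block_image_in_blocks[OF g]]] h
      card_block_image[OF g] by auto
  have BC: "B = blk n q ?x" "C = blk n q ?y" using blocks_eq_blk[OF h(1) x(1)] blocks_eq_blk[OF h(2) x(2)] .
  obtain a1 where a1: "a1 < n" "g $$ (a1, ?x) \<noteq> 0" "block_image n q g B = blk n q a1"
    using block_image_blkE[OF g xn(1)] BC by metis
  obtain b1 where b1: "b1 < n" "g $$ (b1, ?y) \<noteq> 0" "block_image n q g C = blk n q b1"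
    using block_image_blkE[OF g xn(2)] BC by metis
  have "q ?x ?y = q a1 b1" using GL_qD[OF g] a1 b1 xn by metis
  also have "\<dots> = q ?x' ?y'"
    by (rule q_cong_rows_eq[OF Q]) (use x' a1 b1 in \<open>auto simp: mem_blk_iff\<close>)
  finally show ?thesis .
qed

lemma block_image_Stab:
  assumes "qpm n q" "g \<in> GL_q n q"
  shows "block_image n q g \<in> Stab n q"
  using assms block_image_permutes card_block_image q_block_image unfolding Stab_def by blast

lemma maps_blocks_block_image:
  assumes "g \<in> GL_q n q"
  shows "maps_blocks n q g (block_image n q g)"
  using assms by (auto simp: maps_blocks_def block_image_blk blk_self)

lemma maps_blocks_unique:
  assumes g: "g \<in> GL n" and s: "\<sigma> \<in> Stab n q" "\<tau> \<in> Stab n q"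
    and maps: "maps_blocks n q g \<sigma>" "maps_blocks n q g \<tau>"
  shows "\<sigma> = \<tau>"
proof
  fix B show "\<sigma> B = \<tau> B"
  proof (cases "B \<in> blocks n q")
    case True
    then obtain c where c: "c < n" "B = blk n q c" by (auto simp: mem_blocks_iff)
    obtain a where a: "a < n" "g $$ (a, c) \<noteq> 0" using GL_col_nonzero[OF g c(1)] .
    have "a \<in> \<sigma> B" "a \<in> \<tau> B" using maps a c unfolding maps_blocks_def by auto
    then show ?thesis using blocks_eq_blk Stab_in_blocks s True by metis
  next
    case False
    then show ?thesis using s permutes_not_in Stab_permutes by metis
  qed
qed

lemma maps_blocks_mult:
  assumes x: "x \<in> carrier_mat n n" and y: "y \<in> carrier_mat n n" and t: "\<tau> \<in> Stab n q"
    and maps: "maps_blocks n q x \<sigma>" "maps_blocks n q y \<tau>"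
  shows "maps_blocks n q (x * y) (\<sigma> \<circ> \<tau>)"
  unfolding maps_blocks_def
proof (intro allI impI)
  fix a c assume ac: "a < n" "c < n" "(x * y) $$ (a, c) \<noteq> 0"
  obtain m where m: "m < n" "x $$ (a, m) \<noteq> 0" "y $$ (m, c) \<noteq> 0"
    using mat_mult_entry_nonzero[OF x y ac] .
  have "blk n q m = \<tau> (blk n q c)"
    using maps(2) m ac blocks_eq_blk[OF Stab_in_blocks[OF t blk_in_blocks]] unfolding maps_blocks_def
    by metis
  moreover have "a \<in> \<sigma> (blk n q m)" using maps(1) m ac unfolding maps_blocks_def by auto
  ultimately show "a \<in> (\<sigma> \<circ> \<tau>) (blk n q c)" by simp
qed

lemma GL_block_GL: "f \<in> GL_block n q \<Longrightarrow> f \<in> GL n"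
  by (simp add: GL_block_def)

lemma GL_blockD: "f \<in> GL_block n q \<Longrightarrow> a < n \<Longrightarrow> i < n \<Longrightarrow> f $$ (a, i) \<noteq> 0 \<Longrightarrow> a \<in> blk n q i"
  by (simp add: GL_block_def)

lemma maps_blocks_mult_iota:
  assumes f: "f \<in> GL_block n q" and s: "\<sigma> \<in> Stab n q"
  shows "maps_blocks n q (f * iota n q \<sigma>) \<sigma>"
  unfolding maps_blocks_def
proof (intro allI impI)
  fix a c assume ac: "a < n" "c < n" "(f * iota n q \<sigma>) $$ (a, c) \<noteq> 0"
  then have "a \<in> blk n q (iota_perm n q \<sigma> c)"
    using GL_blockD[OF f] iota_perm_less[OF s] mat_mult_iota_entry[OF s GL_carrier[OF GL_block_GL[OF f]]]
    by auto
  then show "a \<in> \<sigma> (blk n q c)" using blk_iota_perm[OF s ac(2)] by simp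
qed

lemma GL_block_mult_iota:
  assumes Q: "qpm n q" and f: "f \<in> GL_block n q" and s: "\<sigma> \<in> Stab n q"
  shows "f * iota n q \<sigma> \<in> GL_q n q"
proof -
  have "q a b = q i j"
    if idx: "a < n" "i < n" "b < n" "j < n"
      and nz: "(f * iota n q \<sigma>) $$ (a, i) \<noteq> 0" "(f * iota n q \<sigma>) $$ (b, j) \<noteq> 0" for a i b j
  proof -
    have "a \<in> blk n q (iota_perm n q \<sigma> i)" "b \<in> blk n q (iota_perm n q \<sigma> j)"
      using maps_blocks_mult_iota[OF f s] idx nz blk_iota_perm[OF s] unfolding maps_blocks_def by auto
    then have "q a b = q (iota_perm n q \<sigma> i) (iota_perm n q \<sigma> j)"
      using q_cong_rows_eq[OF Q] iota_perm_less[OF s] idx by (metis mem_blk_iff rows_eq_sym)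
    also have "\<dots> = q i j" using q_iota_perm[OF s] idx by simp
    finally show ?thesis .
  qed
  then show ?thesis
    using GL_mult[OF GL_block_GL[OF f] iota_GL[OF s]] by (auto simp: GL_q_def q_compatible_def)
qed

lemma mult_iota_inv_GL_block:
  assumes g: "g \<in> GL n" and s: "\<sigma> \<in> Stab n q" and maps: "maps_blocks n q g \<sigma>"
  shows "g * iota n q (inv_into UNIV \<sigma>) \<in> GL_block n q"
proof -
  let ?\<sigma>' = "inv_into UNIV \<sigma>"
  have s': "?\<sigma>' \<in> Stab n q" using Stab_inv[OF s] .
  have "a \<in> blk n q i" if ai: "a < n" "i < n" "(g * iota n q ?\<sigma>') $$ (a, i) \<noteq> 0" for a i
  proof -
    let ?c = "iota_perm n q ?\<sigma>' i"
    have "g $$ (a, ?c) \<noteq> 0" using ai mat_mult_iota_entry[OF s' GL_carrier[OF g] ai(1,2)] by simp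
    then have "a \<in> \<sigma> (blk n q ?c)" using maps ai iota_perm_less[OF s' ai(2)] unfolding maps_blocks_def by auto
    also have "blk n q ?c = ?\<sigma>' (blk n q i)" using blk_iota_perm[OF s' ai(2)] .
    finally show ?thesis using permutes_inverses(1)[OF Stab_permutes[OF s]] by simp
  qed
  then show ?thesis using GL_mult[OF g iota_GL[OF s']] by (simp add: GL_block_def)
qed

lemma GL_block_one: "1\<^sub>m n \<in> GL_block n q"
  by (auto simp: GL_block_def GL_one blk_self)

lemma GL_block_mult:
  assumes f: "f \<in> GL_block n q" and g: "g \<in> GL_block n q"
  shows "f * g \<in> GL_block n q"
proof -
  have "a \<in> blk n q i" if ai: "a < n" "i < n" "(f * g) $$ (a, i) \<noteq> 0" for a i
  proof -
    obtain c where "c < n" "f $$ (a, c) \<noteq> 0" "g $$ (c, i) \<noteq> 0"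
      using mat_mult_entry_nonzero[OF GL_carrier[OF GL_block_GL[OF f]] GL_carrier[OF GL_block_GL[OF g]] ai] .
    then have "a \<in> blk n q c" "c \<in> blk n q i" using GL_blockD f g ai by blast+
    then show ?thesis using blk_eq by metis
  qed
  then show ?thesis using GL_mult[OF GL_block_GL[OF f] GL_block_GL[OF g]] by (simp add: GL_block_def)
qed

lemma GL_block_inverse:
  assumes f: "f \<in> GL_block n q" and h: "h \<in> carrier_mat n n" "f * h = 1\<^sub>m n" "h * f = 1\<^sub>m n"
  shows "h \<in> GL_block n q"
proof -
  have fc: "f \<in> carrier_mat n n" using GL_carrier[OF GL_block_GL[OF f]] .
  have "rows_eq n q i a" if ia: "i < n" "a < n" "h $$ (i, a) \<noteq> 0" for a i
  proof -
    have "rows_eq n q i i \<longleftrightarrow> rows_eq n q i a"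
    proof (rule support_compatible_inverse[OF fc h _ ia, where P = "rows_eq n q i" and Q = "rows_eq n q i"])
      fix x y assume "x < n" "y < n" "f $$ (x, y) \<noteq> 0"
      then have "rows_eq n q y x" using GL_blockD[OF f] by (simp add: mem_blk_iff)
      then show "rows_eq n q i x \<longleftrightarrow> rows_eq n q i y" using rows_eq_trans rows_eq_sym by metis
    qed
    then show ?thesis by (simp add: rows_eq_refl)
  qed
  then have "a \<in> blk n q i" if "a < n" "i < n" "h $$ (a, i) \<noteq> 0" for a i
    using that by (simp add: mem_blk_iff rows_eq_sym)
  then show ?thesis using GL_if_right_inverse[OF h(1) fc h(3)] by (simp add: GL_block_def)
qed

lemma GL_on_subset_GL_block:
  fixes q :: "nat \<Rightarrow> nat \<Rightarrow> 'k::field"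
  assumes B: "B \<in> blocks n q"
  shows "GL_on n B \<subseteq> GL_block n q"
proof
  fix f :: "'k mat" assume f: "f \<in> GL_on n B"
  have fc: "f \<in> carrier_mat n n" using f by (simp add: GL_on_def)
  have "a \<in> blk n q j" if aj: "a < n" "j < n" "f $$ (a, j) \<noteq> 0" for a j
  proof (cases "j \<in> B")
    case True
    then have "a \<in> B" using f aj unfolding GL_on_def by auto
    then show ?thesis using blocks_eq_blk[OF B True] by simp
  next
    case False
    then have "col f j $ a = unit_vec n j $ a" using f aj unfolding GL_on_def by auto
    then have "a = j" using aj fc by (auto split: if_splits)
    then show ?thesis using aj blk_self by simp
  qed
  then show "f \<in> GL_block n q" using f GL_iff_invertible_mat[OF fc] by (simp add: GL_on_def GL_block_def)
qed

lemma block_prod_subset_GL_block: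
  fixes q :: "nat \<Rightarrow> nat \<Rightarrow> 'k::field"
  shows "block_prod n q \<subseteq> GL_block n q"
proof -
  have "foldr (\<lambda>B M. f B * M) Bs (1\<^sub>m n) \<in> GL_block n q"
    if "set Bs \<subseteq> blocks n q" "\<forall>B\<in>set Bs. f B \<in> GL_on n B" for Bs and f :: "nat set \<Rightarrow> 'k mat"
    using that
  proof (induction Bs)
    case (Cons B Bs)
    then have "f B \<in> GL_block n q" using GL_on_subset_GL_block[of B n q] by auto
    then show ?case using Cons GL_block_mult by simp
  qed (simp add: GL_block_one)
  then show ?thesis unfolding block_prod_def by blast
qed

definition block_part :: "nat \<Rightarrow> 'a::semiring_1 mat \<Rightarrow> nat set \<Rightarrow> 'a mat" where
  "block_part n f S = mat n n (\<lambda>(a, i). if i \<in> S then f $$ (a, i) else (if a = i then 1 else 0))"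

lemma block_part_carrier: "block_part n f S \<in> carrier_mat n n"
  by (simp add: block_part_def)

lemma block_part_one: "block_part n (1\<^sub>m n) S = 1\<^sub>m n"
  by (rule eq_matI) (auto simp: block_part_def)

lemma block_part_UNIV:
  assumes "f \<in> carrier_mat n n" "{..<n} \<subseteq> S"
  shows "block_part n f S = f"
  using assms by (intro eq_matI) (auto simp: block_part_def)

lemma block_part_mult_same:
  fixes f h :: "'a::semiring_1 mat"
  assumes f: "f \<in> carrier_mat n n" and h: "h \<in> carrier_mat n n"
    and supp: "\<And>c i. c < n \<Longrightarrow> i \<in> S \<Longrightarrow> c \<notin> S \<Longrightarrow> h $$ (c, i) = 0"
  shows "block_part n f S * block_part n h S = block_part n (f * h) S"
proof (rule eq_matI)
  fix a i assume "a < dim_row (block_part n (f * h) S)" "i < dim_col (block_part n (f * h) S)"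
  then have ai: "a < n" "i < n" by (simp_all add: block_part_def)
  have "(block_part n f S * block_part n h S) $$ (a, i) =
      (\<Sum>c<n. block_part n f S $$ (a, c) * block_part n h S $$ (c, i))"
    by (rule mat_mult_entry[OF block_part_carrier block_part_carrier ai])
  also have "\<dots> = block_part n (f * h) S $$ (a, i)"
  proof (cases "i \<in> S")
    case True
    have "(\<Sum>c<n. block_part n f S $$ (a, c) * block_part n h S $$ (c, i)) = (\<Sum>c<n. f $$ (a, c) * h $$ (c, i))"
      using ai True supp by (intro sum.cong refl) (auto simp: block_part_def)
    then show ?thesis using True ai mat_mult_entry[OF f h ai] by (simp add: block_part_def)
  next
    case False
    have "(\<Sum>c<n. block_part n f S $$ (a, c) * block_part n h S $$ (c, i)) =
        (\<Sum>c<n. if c = i then block_part n f S $$ (a, i) else 0)"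
      using ai False by (intro sum.cong refl) (auto simp: block_part_def)
    then show ?thesis using False ai by (simp add: block_part_def)
  qed
  finally show "(block_part n f S * block_part n h S) $$ (a, i) = block_part n (f * h) S $$ (a, i)" .
qed (simp_all add: block_part_def)

lemma block_part_mult_disjoint:
  fixes f :: "'a::semiring_1 mat"
  assumes disj: "B \<inter> S = {}"
    and supp: "\<And>c i. c < n \<Longrightarrow> i \<in> S \<Longrightarrow> c \<notin> S \<Longrightarrow> f $$ (c, i) = 0"
  shows "block_part n f B * block_part n f S = block_part n f (B \<union> S)"
proof (rule eq_matI)
  fix a i assume "a < dim_row (block_part n f (B \<union> S))" "i < dim_col (block_part n f (B \<union> S))"
  then have ai: "a < n" "i < n" by (simp_all add: block_part_def)
  have "(block_part n f B * block_part n f S) $$ (a, i) =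
      (\<Sum>c<n. block_part n f B $$ (a, c) * block_part n f S $$ (c, i))"
    by (rule mat_mult_entry[OF block_part_carrier block_part_carrier ai])
  also have "\<dots> = block_part n f (B \<union> S) $$ (a, i)"
  proof (cases "i \<in> S")
    case True
    have vanish: "f $$ (c, i) = 0" if "c < n" "c \<in> B \<or> c \<notin> S" for c
      using supp[OF _ True] disj that by blast
    have "(\<Sum>c<n. block_part n f B $$ (a, c) * block_part n f S $$ (c, i)) =
        (\<Sum>c<n. if c = a then f $$ (a, i) else 0)"
      using ai True vanish by (intro sum.cong refl) (auto simp: block_part_def)
    then show ?thesis using True ai by (simp add: block_part_def)
  next
    case False
    have "(\<Sum>c<n. block_part n f B $$ (a, c) * block_part n f S $$ (c, i)) =
        (\<Sum>c<n. if c = i then block_part n f B $$ (a, i) else 0)"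
      using ai False by (intro sum.cong refl) (auto simp: block_part_def)
    then show ?thesis using False ai by (simp add: block_part_def)
  qed
  finally show "(block_part n f B * block_part n f S) $$ (a, i) = block_part n f (B \<union> S) $$ (a, i)" .
qed (simp_all add: block_part_def)

lemma block_part_empty: "block_part n f {} = 1\<^sub>m n"
  by (rule eq_matI) (auto simp: block_part_def)

lemma GL_block_vanish:
  assumes "f \<in> GL_block n q" "B \<in> blocks n q" "c < n" "i \<in> B" "c \<notin> B"
  shows "f $$ (c, i) = 0"
proof (rule ccontr)
  assume "f $$ (c, i) \<noteq> 0"
  then have "c \<in> blk n q i" using GL_blockD[OF assms(1,3)] blocks_subset[OF assms(2)] assms(4) by blast
  then show False using blocks_eq_blk[OF assms(2,4)] assms(5) by simp
qed

lemma block_part_GL_on: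
  assumes B: "B \<in> blocks n q" and f: "f \<in> GL_block n q"
  shows "block_part n f B \<in> GL_on n B"
proof -
  have fc: "f \<in> carrier_mat n n" using GL_carrier[OF GL_block_GL[OF f]] .
  obtain h where h: "h \<in> GL n" "f * h = 1\<^sub>m n" "h * f = 1\<^sub>m n" using GL_inverse[OF GL_block_GL[OF f]] .
  have hB: "h \<in> GL_block n q" using GL_block_inverse[OF f GL_carrier[OF h(1)] h(2,3)] .
  have "block_part n f B * block_part n h B = 1\<^sub>m n"
    using block_part_mult_same[OF fc GL_carrier[OF h(1)] GL_block_vanish[OF hB B]] h(2)
    by (simp add: block_part_one)
  then have "invertible_mat (block_part n f B)"
    using GL_iff_invertible_mat[OF block_part_carrier] GL_if_right_inverse[OF block_part_carrier block_part_carrier]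
    by blast
  moreover have "col (block_part n f B) j = unit_vec n j" if "j < n" "j \<notin> B" for j
    by (rule eq_vecI) (use that in \<open>auto simp: block_part_def\<close>)
  moreover have "i \<in> B" if ij: "j \<in> B" "i < n" "block_part n f B $$ (i, j) \<noteq> 0" for i j
  proof -
    have "j < n" using ij(1) blocks_subset[OF B] by blast
    then have "f $$ (i, j) \<noteq> 0" using ij by (simp add: block_part_def)
    then show ?thesis using GL_block_vanish[OF f B ij(2,1)] by blast
  qed
  ultimately show ?thesis by (simp add: GL_on_def block_part_carrier)
qed

lemma blocks_disjoint: "B \<in> blocks n q \<Longrightarrow> C \<in> blocks n q \<Longrightarrow> B \<noteq> C \<Longrightarrow> B \<inter> C = {}"
  by (metis blocks_eq_blk disjoint_iff)

lemma foldr_block_part: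
  assumes f: "f \<in> GL_block n q"
  shows "distinct Bs \<Longrightarrow> set Bs \<subseteq> blocks n q \<Longrightarrow>
    foldr (\<lambda>B M. block_part n f B * M) Bs (1\<^sub>m n) = block_part n f (\<Union>(set Bs))"
proof (induction Bs)
  case Nil
  then show ?case by (simp add: block_part_empty)
next
  case (Cons B Bs)
  have disj: "B \<inter> \<Union>(set Bs) = {}"
  proof -
    have "B \<inter> C = {}" if "C \<in> set Bs" for C
      using blocks_disjoint[of B n q C] Cons.prems that by auto
    then show ?thesis by blast
  qed
  have vanish: "f $$ (c, i) = 0" if ci: "c < n" "i \<in> \<Union>(set Bs)" "c \<notin> \<Union>(set Bs)" for c i
  proof -
    obtain C where "C \<in> set Bs" "i \<in> C" using ci(2) by blast
    then show ?thesis using GL_block_vanish[OF f, of C c i] ci Cons.prems by auto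
  qed
  have "foldr (\<lambda>B M. block_part n f B * M) Bs (1\<^sub>m n) = block_part n f (\<Union>(set Bs))"
    using Cons by simp
  then show ?case using block_part_mult_disjoint[OF disj vanish] by simp
qed

lemma GL_block_subset_block_prod: "GL_block n q \<subseteq> block_prod n q"
proof
  fix f assume f: "f \<in> GL_block n q"
  obtain Bs where Bs: "set Bs = blocks n q" "distinct Bs"
    using finite_distinct_list[OF finite_blocks] by blast
  have "foldr (\<lambda>B M. block_part n f B * M) Bs (1\<^sub>m n) = f"
    using foldr_block_part[OF f Bs(2)] Bs(1) Union_blocks[of n q]
      block_part_UNIV[OF GL_carrier[OF GL_block_GL[OF f]]]
    by simp
  then show "f \<in> block_prod n q"
    unfolding block_prod_def using Bs block_part_GL_on[OF _ f]
    by (intro CollectI exI[of _ Bs] exI[of _ "block_part n f"]) auto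
qed

lemma block_prod_eq_GL_block: "block_prod n q = GL_block n q"
  using block_prod_subset_GL_block GL_block_subset_block_prod by blast

definition decompose :: "nat \<Rightarrow> (nat \<Rightarrow> nat \<Rightarrow> 'k) \<Rightarrow> 'k::field mat \<Rightarrow> 'k mat \<times> (nat set \<Rightarrow> nat set)" where
  "decompose n q g = (g * iota n q (inv_into UNIV (block_image n q g)), block_image n q g)"

lemma block_image_eqI:
  assumes Q: "qpm n q" and g: "g \<in> GL_q n q" and s: "\<sigma> \<in> Stab n q" "maps_blocks n q g \<sigma>"
  shows "block_image n q g = \<sigma>"
  using maps_blocks_unique[OF GL_q_GL[OF g] block_image_Stab[OF Q g] s(1) maps_blocks_block_image[OF g] s(2)] .

lemma decompose_mult:
  assumes Q: "qpm n q" and x: "x \<in> GL_q n q" and y: "y \<in> GL_q n q"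
  shows "decompose n q (x * y) = decompose n q x \<otimes>\<^bsub>semidirect n q\<^esub> decompose n q y"
proof -
  let ?s = "block_image n q x" and ?t = "block_image n q y"
  let ?I = "\<lambda>\<sigma>. iota n q \<sigma>" and ?i = "inv_into UNIV"
  have s: "?s \<in> Stab n q" and t: "?t \<in> Stab n q"
    using block_image_Stab[OF Q] x y by blast+
  have xc: "x \<in> carrier_mat n n" and yc: "y \<in> carrier_mat n n"
    using x y by (simp_all add: GL_q_def GL_carrier)
  have st: "block_image n q (x * y) = ?s \<circ> ?t"
    using block_image_eqI[OF Q GL_q_mult[OF x y] Stab_comp[OF s t]]
      maps_blocks_mult[OF xc yc t maps_blocks_block_image[OF x] maps_blocks_block_image[OF y]] by blast
  have inv_st: "?i (?s \<circ> ?t) = ?i ?t \<circ> ?i ?s"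
    using o_inv_distrib permutes_bij Stab_permutes s t by blast
  have "x * ?I (?i ?s) * ?I ?s = x"
    using mat_mult_assoc_cancel_right[OF xc iota_carrier iota_carrier iota_inv(2)[OF s]] .
  moreover have "x * (y * ?I (?i ?t)) * ?I (?i ?s) = x * y * (?I (?i ?t) * ?I (?i ?s))"
    using assoc_mult_mat[OF xc mult_carrier_mat[OF yc iota_carrier] iota_carrier]
      assoc_mult_mat[OF yc iota_carrier iota_carrier] assoc_mult_mat[OF xc yc mult_carrier_mat[OF iota_carrier iota_carrier]]
    by simp
  ultimately show ?thesis
    unfolding decompose_def st inv_st
    by (simp add: semidirect_def mat_inv_iota[OF s] iota_comp Stab_inv s t)
qed

lemma decompose_bij:
  assumes Q: "qpm n q"
  shows "bij_betw (decompose n q) (GL_q n q) (block_prod n q \<times> Stab n q)"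
proof (rule bij_betw_byWitness[where f' = "\<lambda>(f, \<sigma>). f * iota n q \<sigma>"])
  show "\<forall>g\<in>GL_q n q. (\<lambda>(f, \<sigma>). f * iota n q \<sigma>) (decompose n q g) = g"
    using mat_mult_assoc_cancel_right[OF GL_carrier[OF GL_q_GL] iota_carrier iota_carrier
        iota_inv(2)[OF block_image_Stab[OF Q]]]
    by (simp add: decompose_def)
  show "\<forall>p\<in>block_prod n q \<times> Stab n q. decompose n q ((\<lambda>(f, \<sigma>). f * iota n q \<sigma>) p) = p"
  proof safe
    fix f \<sigma> assume f: "f \<in> block_prod n q" and s: "\<sigma> \<in> Stab n q"
    then have fB: "f \<in> GL_block n q" by (simp add: block_prod_eq_GL_block)
    have "block_image n q (f * iota n q \<sigma>) = \<sigma>"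
      using block_image_eqI[OF Q GL_block_mult_iota[OF Q fB s] s maps_blocks_mult_iota[OF fB s]] .
    then show "decompose n q (f * iota n q \<sigma>) = (f, \<sigma>)"
      using iota_inv(1)[OF s] GL_carrier[OF GL_block_GL[OF fB]]
      by (simp add: decompose_def mat_mult_assoc_cancel_right iota_carrier)
  qed
  show "decompose n q ` GL_q n q \<subseteq> block_prod n q \<times> Stab n q"
  proof
    fix p assume "p \<in> decompose n q ` GL_q n q"
    then obtain g where g: "g \<in> GL_q n q" "p = decompose n q g" by blast
    then show "p \<in> block_prod n q \<times> Stab n q"
      using mult_iota_inv_GL_block[OF GL_q_GL[OF g(1)] block_image_Stab[OF Q g(1)] maps_blocks_block_image[OF g(1)]]
        block_image_Stab[OF Q g(1)]
      by (simp add: decompose_def block_prod_eq_GL_block)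
  qed
  show "(\<lambda>(f, \<sigma>). f * iota n q \<sigma>) ` (block_prod n q \<times> Stab n q) \<subseteq> GL_q n q"
    using GL_block_mult_iota[OF Q] by (auto simp: block_prod_eq_GL_block)
qed

section \<open>The relation ideal and linear substitutions\<close>

lemma fa_mult_Nil: "fa_mult f g [] = f [] * g []"
  by (simp add: fa_mult_def)

lemma fa_mult_singleton: "fa_mult f g [x] = f [] * g [x] + f [x] * g []"
  by (simp add: fa_mult_def)

lemma fa_mult_pair: "fa_mult f g [x, y] = f [] * g [x, y] + f [x] * g [y] + f [x, y] * g []"
  by (simp add: fa_mult_def numeral_2_eq_2 atMost_Suc)

lemma zero_in_fa_carrier: "(\<lambda>w. 0) \<in> fa_carrier n"
  by (simp add: fa_carrier_def)

lemma fa_one_in_fa_carrier: "fa_one \<in> fa_carrier n"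
  by (simp add: fa_carrier_def fa_one_def)

lemma fa_gen_in_fa_carrier: "i < n \<Longrightarrow> fa_gen i \<in> fa_carrier n"
  by (simp add: fa_carrier_def fa_gen_def)

lemma fa_add_in_fa_carrier:
  assumes x: "x \<in> fa_carrier n" and y: "y \<in> fa_carrier n"
  shows "fa_add x y \<in> fa_carrier n"
proof -
  have "{w. fa_add x y w \<noteq> 0} \<subseteq> {w. x w \<noteq> 0} \<union> {w. y w \<noteq> 0}" by (auto simp: fa_add_def)
  then have "finite {w. fa_add x y w \<noteq> 0}"
    by (rule finite_subset) (use x y in \<open>simp add: fa_carrier_def\<close>)
  moreover have "set w \<subseteq> {..<n}" if "fa_add x y w \<noteq> 0" for w
  proof -
    have "x w \<noteq> 0 \<or> y w \<noteq> 0" using that by (auto simp: fa_add_def)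
    then show ?thesis using x y unfolding fa_carrier_def by blast
  qed
  ultimately show ?thesis unfolding fa_carrier_def by auto
qed

lemma fa_smult_in_fa_carrier:
  assumes x: "x \<in> fa_carrier n"
  shows "fa_smult c x \<in> fa_carrier n"
proof -
  have "{w. fa_smult c x w \<noteq> 0} \<subseteq> {w. x w \<noteq> 0}" by (auto simp: fa_smult_def)
  then have "finite {w. fa_smult c x w \<noteq> 0}"
    by (rule finite_subset) (use x in \<open>simp add: fa_carrier_def\<close>)
  then show ?thesis using x unfolding fa_carrier_def fa_smult_def by auto
qed

lemma fa_sub_self: "fa_sub x x = (\<lambda>w. 0)"
  by (auto simp: fa_sub_def)

lemma fa_sub_zero: "fa_sub x (\<lambda>w. 0) = x"
  by (auto simp: fa_sub_def)

lemma fa_mult_one_left: "fa_mult fa_one x = x"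
proof
  fix w :: "nat list"
  have "fa_mult fa_one x w = (\<Sum>i\<le>length w. if i = 0 then x w else 0)"
    unfolding fa_mult_def fa_one_def by (intro sum.cong refl) auto
  then show "fa_mult fa_one x w = x w" by simp
qed

lemma fa_mult_one_right: "fa_mult x fa_one = x"
proof
  fix w :: "nat list"
  have "fa_mult x fa_one w = (\<Sum>i\<le>length w. if i = length w then x w else 0)"
    unfolding fa_mult_def fa_one_def by (intro sum.cong refl) auto
  then show "fa_mult x fa_one w = x w" by simp
qed

lemma fa_mult_gen_gen: "fa_mult (fa_gen a) (fa_gen b) w = (if w = [a, b] then 1 else 0)"
proof -
  have split: "take k w = [a] \<and> drop k w = [b] \<longleftrightarrow> k = 1 \<and> w = [a, b]" for k
  proof
    assume h: "take k w = [a] \<and> drop k w = [b]"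
    have "min (length w) k = 1" "length w - k = 1"
      using arg_cong[OF conjunct1[OF h], of length] arg_cong[OF conjunct2[OF h], of length] by simp_all
    then have "k = 1" by simp
    moreover have "w = [a] @ [b]" using h append_take_drop_id[of k w] by metis
    ultimately show "k = 1 \<and> w = [a, b]" by simp
  qed auto
  have "fa_mult (fa_gen a) (fa_gen b) w = (\<Sum>k\<le>length w. if k = 1 \<and> w = [a, b] then 1 else 0)"
    unfolding fa_mult_def fa_gen_def using split by (intro sum.cong refl) auto
  also have "\<dots> = (if w = [a, b] then 1 else 0)"
    by (cases "w = [a, b]") simp_all
  finally show ?thesis .
qed

lemma fa_mult_gen_gen_in_fa_carrier:
  "a < n \<Longrightarrow> b < n \<Longrightarrow> fa_mult (fa_gen a) (fa_gen b) \<in> fa_carrier n"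
  by (auto simp: fa_carrier_def fa_mult_gen_gen)

lemma sq_rel_apply:
  "sq_rel q i j w = (if w = [j, i] then 1 else 0) - q i j * (if w = [i, j] then 1 else 0)"
  unfolding sq_rel_def fa_sub_def fa_smult_def fa_mult_gen_gen ..

lemma sq_rel_in_fa_carrier: "i < n \<Longrightarrow> j < n \<Longrightarrow> sq_rel q i j \<in> fa_carrier n"
proof -
  assume ij: "i < n" "j < n"
  have sub: "{w. sq_rel q i j w \<noteq> 0} \<subseteq> {[j, i], [i, j]}"
  proof
    fix w assume "w \<in> {w. sq_rel q i j w \<noteq> 0}"
    then have "sq_rel q i j w \<noteq> 0" by simp
    then show "w \<in> {[j, i], [i, j]}" unfolding sq_rel_apply by (simp split: if_splits)
  qed
  have "finite {w. sq_rel q i j w \<noteq> 0}" by (rule finite_subset[OF sub]) simp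
  moreover have "set w \<subseteq> {..<n}" if "sq_rel q i j w \<noteq> 0" for w
    using sub that ij by auto
  ultimately show ?thesis unfolding fa_carrier_def by auto
qed

lemma sq_rel_homog: "i < n \<Longrightarrow> j < n \<Longrightarrow> fa_homog n 2 (sq_rel q i j)"
  unfolding fa_homog_def using sq_rel_in_fa_carrier by (simp add: sq_rel_apply split: if_splits)

lemma sq_rel_in_sq_ideal: "i < n \<Longrightarrow> j < n \<Longrightarrow> sq_rel q i j \<in> sq_ideal n q"
  using sq_ideal.gen[OF fa_one_in_fa_carrier fa_one_in_fa_carrier, of i n j q]
  by (simp add: fa_mult_one_left fa_mult_one_right)

lemma sq_ideal_smult: "x \<in> sq_ideal n q \<Longrightarrow> fa_smult c x \<in> sq_ideal n q"
proof (induction rule: sq_ideal.induct)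
  case zero then show ?case using sq_ideal.zero by (simp add: fa_smult_def)
next
  case (add x y)
  have "fa_smult c (fa_add x y) = fa_add (fa_smult c x) (fa_smult c y)"
    by (auto simp: fa_smult_def fa_add_def algebra_simps)
  then show ?case using add sq_ideal.add by metis
next
  case (gen a b i j)
  have ca: "fa_smult c a \<in> fa_carrier n" using gen by (auto simp: fa_carrier_def fa_smult_def)
  have "fa_smult c (fa_mult (fa_mult a (sq_rel q i j)) b) = fa_mult (fa_mult (fa_smult c a) (sq_rel q i j)) b"
    by (auto simp: fa_smult_def fa_mult_def sum_distrib_left sum_distrib_right algebra_simps intro!: ext)
  then show ?case using sq_ideal.gen[OF ca gen(2,3,4)] by simp
qed

lemma sq_ideal_sub: "x \<in> sq_ideal n q \<Longrightarrow> y \<in> sq_ideal n q \<Longrightarrow> fa_sub x y \<in> sq_ideal n q"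
proof -
  assume xy: "x \<in> sq_ideal n q" "y \<in> sq_ideal n q"
  have "fa_sub x y = fa_add x (fa_smult (-1) y)" by (auto simp: fa_sub_def fa_add_def fa_smult_def)
  then show ?thesis using xy sq_ideal_smult sq_ideal.add by metis
qed

lemma sq_ideal_sum: "finite P \<Longrightarrow> (\<And>p. p \<in> P \<Longrightarrow> X p \<in> sq_ideal n q) \<Longrightarrow> (\<lambda>w. \<Sum>p\<in>P. X p w) \<in> sq_ideal n q"
proof (induction P rule: finite_induct)
  case empty then show ?case using sq_ideal.zero by simp
next
  case (insert p P)
  have "(\<lambda>w. \<Sum>p\<in>insert p P. X p w) = fa_add (X p) (\<lambda>w. \<Sum>p\<in>P. X p w)"
    using insert by (auto simp: fa_add_def intro!: ext)
  moreover have "fa_add (X p) (\<lambda>w. \<Sum>p\<in>P. X p w) \<in> sq_ideal n q"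
    using insert by (intro sq_ideal.add) auto
  ultimately show ?case by simp
qed

lemma fa_mult_sum_right: "finite P \<Longrightarrow> fa_mult A (\<lambda>w. \<Sum>p\<in>P. F p w) = (\<lambda>w. \<Sum>p\<in>P. fa_mult A (F p) w)"
  by (auto simp: fa_mult_def sum_distrib_left intro!: ext sum.swap)

lemma fa_mult_sum_left: "finite P \<Longrightarrow> fa_mult (\<lambda>w. \<Sum>p\<in>P. F p w) B = (\<lambda>w. \<Sum>p\<in>P. fa_mult (F p) B w)"
  by (auto simp: fa_mult_def sum_distrib_right intro!: ext sum.swap)

lemma fa_mult_smult_right: "fa_mult A (\<lambda>w. c * F w) = (\<lambda>w. c * fa_mult A F w)"
  by (auto simp: fa_mult_def sum_distrib_left algebra_simps intro!: ext)

lemma fa_mult_smult_left: "fa_mult (\<lambda>w. c * F w) B = (\<lambda>w. c * fa_mult F B w)"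
  by (auto simp: fa_mult_def sum_distrib_left algebra_simps intro!: ext)

lemma sq_ideal_sandwich:
  assumes A: "A \<in> fa_carrier n" and B: "B \<in> fa_carrier n" and P: "finite P"
    and ij: "\<And>p. p \<in> P \<Longrightarrow> fst p < n \<and> snd p < n"
  shows "fa_mult (fa_mult A (\<lambda>w. \<Sum>p\<in>P. c p * sq_rel q (fst p) (snd p) w)) B \<in> sq_ideal n q"
proof -
  have "fa_mult (fa_mult A (\<lambda>w. \<Sum>p\<in>P. c p * sq_rel q (fst p) (snd p) w)) B
      = (\<lambda>w. \<Sum>p\<in>P. c p * fa_mult (fa_mult A (sq_rel q (fst p) (snd p))) B w)"
    by (simp add: fa_mult_sum_right[OF P] fa_mult_sum_left[OF P] fa_mult_smult_right fa_mult_smult_left)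
  also have "\<dots> \<in> sq_ideal n q"
  proof (rule sq_ideal_sum[OF P])
    fix p assume "p \<in> P"
    then have "fa_mult (fa_mult A (sq_rel q (fst p) (snd p))) B \<in> sq_ideal n q"
      using sq_ideal.gen[OF A B] ij by auto
    then show "(\<lambda>w. c p * fa_mult (fa_mult A (sq_rel q (fst p) (snd p))) B w) \<in> sq_ideal n q"
      using sq_ideal_smult[of _ n q "c p"] unfolding fa_smult_def by blast
  qed
  finally show ?thesis .
qed

definition rel_functional :: "(nat \<Rightarrow> nat \<Rightarrow> 'k::field) \<Rightarrow> nat \<Rightarrow> nat \<Rightarrow> (nat list \<Rightarrow> 'k) \<Rightarrow> 'k" where
  "rel_functional q a b x = x [a, b] + (if a = b then 0 else q a b * x [b, a])"

lemma rel_functional_add: "rel_functional q a b (fa_add x y) = rel_functional q a b x + rel_functional q a b y"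
  by (simp add: rel_functional_def fa_add_def algebra_simps)

lemma rel_functional_smult: "rel_functional q a b (fa_smult c x) = c * rel_functional q a b x"
  by (simp add: rel_functional_def fa_smult_def algebra_simps)

lemma rel_functional_sub: "rel_functional q a b (fa_sub x y) = rel_functional q a b x - rel_functional q a b y"
  by (simp add: rel_functional_def fa_sub_def algebra_simps)

lemma rel_functional_mult: "rel_functional q a b (fa_mult X Y) = X [] * rel_functional q a b Y + X [a] * Y [b]
   + (if a = b then 0 else q a b * X [b] * Y [a]) + rel_functional q a b X * Y []"
  by (simp add: rel_functional_def fa_mult_pair algebra_simps)

lemma sq_ideal_vanish:
  assumes Q: "qpm n q"
  shows "x \<in> sq_ideal n q \<Longrightarrow> x [] = 0 \<and> (\<forall>i. x [i] = 0) \<and> (\<forall>a<n. \<forall>b<n. rel_functional q a b x = 0)"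
proof (induction rule: sq_ideal.induct)
  case zero then show ?case by (simp add: rel_functional_def)
next
  case (add x y) then show ?case by (simp add: rel_functional_add) (simp add: fa_add_def)
next
  case (gen a b i j)
  let ?r = "sq_rel q i j"
  have r0: "?r [] = 0" "?r [k] = 0" for k by (simp_all add: sq_rel_apply)
  have lr: "rel_functional q x y ?r = 0" if "x < n" "y < n" for x y
  proof -
    have qq: "q i i = 1" "q j j = 1" "q i j * q j i = 1" using Q gen by (auto simp: qpm_def)
    show ?thesis unfolding rel_functional_def sq_rel_apply using qq
      by (cases "x = y"; cases "x = i"; cases "y = j"; cases "x = j"; cases "y = i") (simp_all add: algebra_simps)
  qed
  let ?X = "fa_mult a ?r"
  have X: "?X [] = 0" "?X [k] = 0" "rel_functional q x y ?X = a [] * rel_functional q x y ?r" for k x y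
    by (simp_all add: fa_mult_Nil fa_mult_singleton rel_functional_mult r0)
  show ?case using X lr by (simp add: fa_mult_Nil fa_mult_singleton rel_functional_mult r0)
qed

definition gen_image :: "nat \<Rightarrow> 'k::field mat \<Rightarrow> nat \<Rightarrow> nat list \<Rightarrow> 'k" where
  "gen_image n g k = (\<lambda>w. \<Sum>l<n. g $$ (l, k) * fa_gen l w)"

lemma gen_image_Nil: "gen_image n g k [] = 0"
  by (simp add: gen_image_def fa_gen_def)

lemma gen_image_singleton: "x < n \<Longrightarrow> gen_image n g k [x] = g $$ (x, k)"
  by (simp add: gen_image_def fa_gen_def if_distrib cong: if_cong)

lemma gen_image_pair: "gen_image n g k [x, y] = 0"
  by (simp add: gen_image_def fa_gen_def)

lemma rel_functional_gen_image: "rel_functional q a b (gen_image n g k) = 0"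
  by (simp add: rel_functional_def gen_image_pair)

definition words :: "nat \<Rightarrow> nat \<Rightarrow> nat list set" where
  "words n L = {w. set w \<subseteq> {..<n} \<and> length w = L}"

fun word_coeff :: "'k::field mat \<Rightarrow> nat list \<Rightarrow> nat list \<Rightarrow> 'k" where
  "word_coeff g (a # u) (b # w) = g $$ (a, b) * word_coeff g u w"
| "word_coeff g _ _ = 1"

text \<open>subst n g is the algebra endomorphism of the free algebra sending v_j to the sum of
  the g_ij v_i: the coefficient of the word u in the image of the word w is word_coeff g u w.\<close>
definition subst :: "nat \<Rightarrow> 'k::field mat \<Rightarrow> (nat list \<Rightarrow> 'k) \<Rightarrow> nat list \<Rightarrow> 'k" where
  "subst n g x u = (if set u \<subseteq> {..<n} then (\<Sum>w\<in>words n (length u). x w * word_coeff g u w) else 0)"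

lemma finite_words: "finite (words n L)"
  unfolding words_def using finite_lists_length_eq[of "{..<n}" L] by simp

lemma words_0: "words n 0 = {[]}" by (auto simp: words_def)

lemma words_Suc: "words n (Suc L) = (\<lambda>(m, w). m # w) ` ({..<n} \<times> words n L)"
proof (intro equalityI subsetI)
  fix v assume "v \<in> words n (Suc L)"
  then obtain m w where "v = m # w" "m < n" "w \<in> words n L" by (cases v) (auto simp: words_def)
  then show "v \<in> (\<lambda>(m, w). m # w) ` ({..<n} \<times> words n L)" by force
qed (auto simp: words_def)

lemma sum_words_Suc: "(\<Sum>w\<in>words n (Suc L). f w) = (\<Sum>m<n. \<Sum>w\<in>words n L. f (m # w))"
proof -
  have inj: "inj_on (\<lambda>(m, w). m # w) ({..<n} \<times> words n L)" by (auto simp: inj_on_def)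
  have "(\<Sum>w\<in>words n (Suc L). f w) = (\<Sum>p\<in>{..<n} \<times> words n L. f ((\<lambda>(m, w). m # w) p))"
    unfolding words_Suc by (rule sum.reindex[OF inj, unfolded comp_def])
  also have "\<dots> = (\<Sum>m<n. \<Sum>w\<in>words n L. f (m # w))"
    by (simp only: sum.cartesian_product) (simp add: split_def)
  finally show ?thesis .
qed

lemma sum_words_add: "(\<Sum>w\<in>words n (k + l). f w) = (\<Sum>w1\<in>words n k. \<Sum>w2\<in>words n l. f (w1 @ w2))"
proof (induction k arbitrary: f)
  case 0 then show ?case by (simp add: words_0)
next
  case (Suc k)
  have "(\<Sum>w\<in>words n (Suc k + l). f w) = (\<Sum>m<n. \<Sum>w\<in>words n (k + l). f (m # w))"
    using sum_words_Suc[where n=n and L="k + l" and f=f] by simp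
  also have "\<dots> = (\<Sum>m<n. \<Sum>w1\<in>words n k. \<Sum>w2\<in>words n l. f (m # w1 @ w2))"
    using Suc.IH by simp
  also have "\<dots> = (\<Sum>w1\<in>words n (Suc k). \<Sum>w2\<in>words n l. f (w1 @ w2))"
    using sum_words_Suc[where n=n and L=k and f="\<lambda>w1. \<Sum>w2\<in>words n l. f (w1 @ w2)"] by simp
  finally show ?case .
qed

lemma word_coeff_append: "length u1 = length w1 \<Longrightarrow> word_coeff g (u1 @ u2) (w1 @ w2) = word_coeff g u1 w1 * word_coeff g u2 w2"
  by (induction u1 w1 rule: list_induct2) auto

lemma sum_words_take_drop:
  assumes u: "set u \<subseteq> {..<n}" and k: "k \<le> length u"
  shows "(\<Sum>w\<in>words n (length u). x (take k w) * y (drop k w) * word_coeff g u w) =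
    subst n g x (take k u) * subst n g y (drop k u)"
proof -
  let ?L = "length u"
  have L: "?L = k + (?L - k)" using k by simp
  have "(\<Sum>w\<in>words n ?L. x (take k w) * y (drop k w) * word_coeff g u w) =
      (\<Sum>w1\<in>words n k. \<Sum>w2\<in>words n (?L - k).
        x (take k (w1 @ w2)) * y (drop k (w1 @ w2)) * word_coeff g u (w1 @ w2))"
    by (subst L, subst sum_words_add) (simp add: L[symmetric])
  also have "\<dots> = (\<Sum>w1\<in>words n k. \<Sum>w2\<in>words n (?L - k).
      (x w1 * word_coeff g (take k u) w1) * (y w2 * word_coeff g (drop k u) w2))"
  proof (intro sum.cong refl)
    fix w1 w2 assume "w1 \<in> words n k"
    then have lw: "length w1 = k" by (simp add: words_def)
    have "word_coeff g u (w1 @ w2) = word_coeff g (take k u @ drop k u) (w1 @ w2)" by simp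
    also have "\<dots> = word_coeff g (take k u) w1 * word_coeff g (drop k u) w2"
      using lw k by (intro word_coeff_append) auto
    finally show "x (take k (w1 @ w2)) * y (drop k (w1 @ w2)) * word_coeff g u (w1 @ w2) =
        (x w1 * word_coeff g (take k u) w1) * (y w2 * word_coeff g (drop k u) w2)"
      using lw by (simp add: ac_simps)
  qed
  also have "\<dots> = subst n g x (take k u) * subst n g y (drop k u)"
    using u k set_take_subset[of k u] set_drop_subset[of k u]
    by (simp add: subst_def sum_product min_def)
  finally show ?thesis .
qed

lemma subst_mult: "subst n g (fa_mult x y) = fa_mult (subst n g x) (subst n g y)"
proof
  fix u :: "nat list"
  let ?L = "length u"
  show "subst n g (fa_mult x y) u = fa_mult (subst n g x) (subst n g y) u"
  proof (cases "set u \<subseteq> {..<n}")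
    case True
    have "subst n g (fa_mult x y) u = (\<Sum>w\<in>words n ?L. fa_mult x y w * word_coeff g u w)"
      using True by (simp add: subst_def)
    also have "\<dots> = (\<Sum>w\<in>words n ?L. (\<Sum>k\<le>?L. x (take k w) * y (drop k w)) * word_coeff g u w)"
      by (intro sum.cong refl) (simp add: fa_mult_def words_def)
    also have "\<dots> = (\<Sum>k\<le>?L. \<Sum>w\<in>words n ?L. x (take k w) * y (drop k w) * word_coeff g u w)"
      by (simp add: sum_distrib_right sum.swap[of _ "words n ?L"])
    also have "\<dots> = fa_mult (subst n g x) (subst n g y) u"
      unfolding fa_mult_def using sum_words_take_drop[OF True] by (intro sum.cong) simp_all
    finally show ?thesis .
  next
    case False
    have "subst n g x (take k u) * subst n g y (drop k u) = 0" for k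
    proof -
      have "\<not> set (take k u) \<subseteq> {..<n} \<or> \<not> set (drop k u) \<subseteq> {..<n}"
        using False by (metis append_take_drop_id set_append Un_subset_iff)
      then show ?thesis unfolding subst_def by auto
    qed
    then have "fa_mult (subst n g x) (subst n g y) u = 0" unfolding fa_mult_def by (intro sum.neutral) auto
    then show ?thesis using False unfolding subst_def by simp
  qed
qed

lemma sum_word_coeff_mult:
  assumes g: "g \<in> carrier_mat n n" and h: "h \<in> carrier_mat n n"
  shows "length u = L \<Longrightarrow> length w' = L \<Longrightarrow> set u \<subseteq> {..<n} \<Longrightarrow> set w' \<subseteq> {..<n} \<Longrightarrow>
    (\<Sum>w\<in>words n L. word_coeff h u w * word_coeff g w w') = word_coeff (h * g) u w'"
proof (induction L arbitrary: u w')
  case 0 then show ?case by (simp add: words_0)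
next
  case (Suc L)
  obtain a u1 where u: "u = a # u1" using Suc by (cases u) auto
  obtain b w1 where w: "w' = b # w1" using Suc by (cases w') auto
  have ab: "a < n" "b < n" "length u1 = L" "length w1 = L" "set u1 \<subseteq> {..<n}" "set w1 \<subseteq> {..<n}"
    using Suc u w by auto
  have "(\<Sum>w\<in>words n (Suc L). word_coeff h u w * word_coeff g w w') = (\<Sum>m<n. \<Sum>w\<in>words n L. (h $$ (a, m) * g $$ (m, b)) * (word_coeff h u1 w * word_coeff g w w1))"
    unfolding sum_words_Suc u w by (simp add: ac_simps)
  also have "\<dots> = (\<Sum>m<n. h $$ (a, m) * g $$ (m, b)) * word_coeff (h * g) u1 w1"
    using Suc.IH[OF ab(3,4,5,6)] by (simp add: sum_distrib_left[symmetric] sum_distrib_right)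
  also have "\<dots> = word_coeff (h * g) u w'" using mat_mult_entry[OF h g ab(1,2)] u w by simp
  finally show ?case .
qed

lemma word_coeff_one:
  "length u = length w \<Longrightarrow> set u \<subseteq> {..<n} \<Longrightarrow> set w \<subseteq> {..<n} \<Longrightarrow>
    word_coeff (1\<^sub>m n :: 'k::field mat) u w = (if u = w then 1 else 0)"
  by (induction u w rule: list_induct2) auto

lemma subst_comp:
  assumes g: "g \<in> carrier_mat n n" and h: "h \<in> carrier_mat n n"
  shows "subst n h (subst n g x) = subst n (h * g) x"
proof
  fix u :: "nat list"
  show "subst n h (subst n g x) u = subst n (h * g) x u"
  proof (cases "set u \<subseteq> {..<n}")
    case True
    let ?L = "length u"
    have "subst n h (subst n g x) u = (\<Sum>w\<in>words n ?L. subst n g x w * word_coeff h u w)"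
      using True by (simp add: subst_def)
    also have "\<dots> = (\<Sum>w\<in>words n ?L. (\<Sum>w'\<in>words n ?L. x w' * word_coeff g w w') * word_coeff h u w)"
    proof (rule sum.cong[OF refl])
      fix w assume "w \<in> words n ?L"
      then have w: "set w \<subseteq> {..<n}" "length w = ?L" by (auto simp: words_def)
      show "subst n g x w * word_coeff h u w = (\<Sum>w'\<in>words n ?L. x w' * word_coeff g w w') * word_coeff h u w"
        unfolding subst_def using w by simp
    qed
    also have "\<dots> = (\<Sum>w'\<in>words n ?L. x w' * (\<Sum>w\<in>words n ?L. word_coeff h u w * word_coeff g w w'))"
    proof -
      have "(\<Sum>w\<in>words n ?L. (\<Sum>w'\<in>words n ?L. x w' * word_coeff g w w') * word_coeff h u w)
          = (\<Sum>w\<in>words n ?L. \<Sum>w'\<in>words n ?L. x w' * (word_coeff h u w * word_coeff g w w'))"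
        unfolding sum_distrib_right by (intro sum.cong refl) (simp add: ac_simps)
      also have "\<dots> = (\<Sum>w'\<in>words n ?L. \<Sum>w\<in>words n ?L. x w' * (word_coeff h u w * word_coeff g w w'))"
        by (rule sum.swap)
      also have "\<dots> = (\<Sum>w'\<in>words n ?L. x w' * (\<Sum>w\<in>words n ?L. word_coeff h u w * word_coeff g w w'))"
        by (simp add: sum_distrib_left)
      finally show ?thesis .
    qed
    also have "\<dots> = (\<Sum>w'\<in>words n ?L. x w' * word_coeff (h * g) u w')"
      by (intro sum.cong refl) (use sum_word_coeff_mult[OF g h] True in \<open>auto simp: words_def\<close>)
    finally show ?thesis using True unfolding subst_def by simp
  qed (simp add: subst_def)
qed

lemma subst_one_mat:
  assumes x: "x \<in> fa_carrier n"
  shows "subst n (1\<^sub>m n) x = x"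
proof
  fix u :: "nat list"
  show "subst n (1\<^sub>m n) x u = x u"
  proof (cases "set u \<subseteq> {..<n}")
    case True
    have "subst n (1\<^sub>m n) x u = (\<Sum>w\<in>words n (length u). x w * word_coeff (1\<^sub>m n) u w)"
      using True by (simp add: subst_def)
    also have "\<dots> = (\<Sum>w\<in>words n (length u). if w = u then x u else 0)"
      using True by (intro sum.cong refl) (auto simp: words_def word_coeff_one)
    also have "\<dots> = x u" using True finite_words by (simp add: words_def)
    finally show ?thesis .
  next
    case False
    then show ?thesis using x unfolding subst_def fa_carrier_def by auto
  qed
qed

lemma subst_in_fa_carrier:
  assumes x: "x \<in> fa_carrier n"
  shows "subst n g x \<in> fa_carrier n"
proof -
  let ?S = "{w. x w \<noteq> 0}"
  have fin: "finite ?S" using x by (simp add: fa_carrier_def)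
  have "{u. subst n g x u \<noteq> 0} \<subseteq> (\<Union>L\<in>length ` ?S. words n L)"
  proof
    fix u assume "u \<in> {u. subst n g x u \<noteq> 0}"
    then have u: "set u \<subseteq> {..<n}" "(\<Sum>w\<in>words n (length u). x w * word_coeff g u w) \<noteq> 0"
      unfolding subst_def by (auto split: if_splits)
    obtain w where "w \<in> words n (length u)" "x w * word_coeff g u w \<noteq> 0"
      by (rule sum.not_neutral_contains_not_neutral[OF u(2)])
    then have "w \<in> words n (length u)" "x w \<noteq> 0" by auto
    then show "u \<in> (\<Union>L\<in>length ` ?S. words n L)" using u by (auto simp: words_def)
  qed
  moreover have "finite (\<Union>L\<in>length ` ?S. words n L)" using fin finite_words by auto
  ultimately have "finite {u. subst n g x u \<noteq> 0}" by (rule finite_subset)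
  then show ?thesis unfolding fa_carrier_def subst_def by auto
qed

lemma subst_add: "subst n g (fa_add x y) = fa_add (subst n g x) (subst n g y)"
  by (auto simp: subst_def fa_add_def sum.distrib algebra_simps intro!: ext)

lemma subst_smult: "subst n g (fa_smult c x) = fa_smult c (subst n g x)"
  by (auto simp: subst_def fa_smult_def sum_distrib_left algebra_simps intro!: ext)

lemma subst_sub: "subst n g (fa_sub x y) = fa_sub (subst n g x) (subst n g y)"
  by (auto simp: subst_def fa_sub_def sum_subtractf algebra_simps intro!: ext)

lemma subst_zero: "subst n g (\<lambda>w. 0) = (\<lambda>w. 0)"
  by (auto simp: subst_def intro!: ext)

lemma subst_fa_one: "subst n g fa_one = fa_one"
proof
  fix u show "subst n g fa_one u = fa_one u"
  proof (cases "u = []")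
    case True then show ?thesis by (simp add: subst_def words_0 fa_one_def)
  next
    case False
    then have "subst n g fa_one u = 0" unfolding subst_def fa_one_def
      by (auto simp: words_def intro!: sum.neutral)
    then show ?thesis using False by (simp add: fa_one_def)
  qed
qed

lemma subst_gen:
  assumes j: "j < n"
  shows "subst n g (fa_gen j) = gen_image n g j"
proof
  fix u show "subst n g (fa_gen j) u = gen_image n g j u"
  proof (cases "\<exists>a. u = [a] \<and> a < n")
    case True
    then obtain a where a: "u = [a]" "a < n" by auto
    have "subst n g (fa_gen j) u = (\<Sum>w\<in>words n (length u). fa_gen j w * word_coeff g u w)"
      using a by (simp add: subst_def)
    also have "\<dots> = (\<Sum>w\<in>words n (length u). if w = [j] then g $$ (a, j) else 0)"
      using a by (intro sum.cong refl) (auto simp: fa_gen_def words_def)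
    also have "\<dots> = gen_image n g j u"
      using j a finite_words[of n "length u"] by (simp add: words_def gen_image_singleton)
    finally show ?thesis .
  next
    case False
    have "subst n g (fa_gen j) u = 0"
    proof (cases "set u \<subseteq> {..<n}")
      case True
      then have "length u \<noteq> 1" using False by (auto simp: length_Suc_conv)
      then show ?thesis unfolding subst_def fa_gen_def by (auto simp: words_def intro!: sum.neutral)
    qed (simp add: subst_def)
    moreover have "gen_image n g j u = 0"
      using False by (auto simp: gen_image_def fa_gen_def intro!: sum.neutral)
    ultimately show ?thesis by simp
  qed
qed

lemma subst_homog:
  assumes "fa_homog n d x" shows "fa_homog n d (subst n g x)"
proof -
  have "length u = d" if "subst n g x u \<noteq> 0" for u
  proof -
    from that have u: "set u \<subseteq> {..<n}" "(\<Sum>w\<in>words n (length u). x w * word_coeff g u w) \<noteq> 0"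
      unfolding subst_def by (auto split: if_splits)
    obtain w where "w \<in> words n (length u)" "x w * word_coeff g u w \<noteq> 0"
      by (rule sum.not_neutral_contains_not_neutral[OF u(2)])
    then have "w \<in> words n (length u)" "x w \<noteq> 0" by auto
    then show ?thesis using assms by (auto simp: words_def fa_homog_def)
  qed
  then show ?thesis using subst_in_fa_carrier assms by (auto simp: fa_homog_def)
qed

section \<open>Graded automorphisms are the invertible q-compatible matrices\<close>

lemma sum_sq_rel_pair:
  fixes c :: "nat \<times> nat \<Rightarrow> 'k::field"
  assumes "x < n" "y < n"
  shows "(\<Sum>p\<in>{..<n}\<times>{..<n}. c p * sq_rel q (fst p) (snd p) [x, y]) = c (y, x) - q x y * c (x, y)"
proof -
  have summand: "c p * sq_rel q (fst p) (snd p) [x, y] =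
      (if p = (y, x) then c p else 0) - (if p = (x, y) then q x y * c p else 0)" for p
  proof -
    obtain a b where p: "p = (a, b)" by (cases p)
    show ?thesis unfolding p sq_rel_apply
      by (cases "a = y"; cases "b = x"; cases "a = x"; cases "b = y") (simp_all add: algebra_simps)
  qed
  have "(\<Sum>p\<in>{..<n}\<times>{..<n}. c p * sq_rel q (fst p) (snd p) [x, y]) =
      (\<Sum>p\<in>{..<n}\<times>{..<n}. (if p = (y, x) then c p else 0) - (if p = (x, y) then q x y * c p else 0))"
    by (rule sum.cong[OF refl summand])
  also have "\<dots> = c (y, x) - q x y * c (x, y)"
    using assms by (simp add: sum_subtractf)
  finally show ?thesis .
qed

lemma degree_two_in_rel_span:
  fixes X :: "nat list \<Rightarrow> 'k::field"
  assumes supp: "\<And>w. X w \<noteq> 0 \<Longrightarrow> length w = 2 \<and> set w \<subseteq> {..<n}"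
    and killed: "\<And>a b. a < n \<Longrightarrow> b < n \<Longrightarrow> rel_functional q a b X = 0"
  shows "X = (\<lambda>w. \<Sum>p\<in>{..<n}\<times>{..<n}.
    (if fst p < snd p then X [snd p, fst p] else 0) * sq_rel q (fst p) (snd p) w)"
proof
  fix w :: "nat list"
  let ?c = "\<lambda>p. if fst p < snd p then X [snd p, fst p] else 0"
  show "X w = (\<Sum>p\<in>{..<n}\<times>{..<n}. ?c p * sq_rel q (fst p) (snd p) w)"
  proof (cases "\<exists>x y. w = [x, y] \<and> x < n \<and> y < n")
    case True
    then obtain x y where w: "w = [x, y]" "x < n" "y < n" by auto
    have "X [x, y] = ?c (y, x) - q x y * ?c (x, y)"
    proof -
      consider "y < x" | "x < y" | "x = y" by linarith
      then show ?thesis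
      proof cases
        case 2
        then have "X [x, y] + q x y * X [y, x] = 0" using killed[OF w(2,3)] by (simp add: rel_functional_def)
        then show ?thesis using 2 by (simp add: eq_neg_iff_add_eq_0)
      qed (use killed[OF w(2,3)] in \<open>auto simp: rel_functional_def\<close>)
    qed
    then show ?thesis unfolding w(1) sum_sq_rel_pair[OF w(2,3)] .
  next
    case False
    have "X w = 0"
    proof (rule ccontr)
      assume "X w \<noteq> 0"
      then have "length w = 2" "set w \<subseteq> {..<n}" using supp by auto
      then obtain x y where "w = [x, y]" by (auto simp: numeral_2_eq_2 length_Suc_conv)
      then show False using False \<open>set w \<subseteq> {..<n}\<close> by auto
    qed
    moreover have "sq_rel q (fst p) (snd p) w = 0" if p_in: "p \<in> {..<n}\<times>{..<n}" for p
    proof -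
      obtain a b where p: "p = (a, b)" "a < n" "b < n" using p_in by (cases p) auto
      then have "w \<noteq> [b, a]" "w \<noteq> [a, b]" using False by blast+
      then show ?thesis using p(1) by (simp add: sq_rel_apply)
    qed
    ultimately show ?thesis by simp
  qed
qed

lemma subst_sq_rel:
  assumes "i < n" "j < n"
  shows "subst n g (sq_rel q i j) =
    fa_sub (fa_mult (gen_image n g j) (gen_image n g i)) (fa_smult (q i j) (fa_mult (gen_image n g i) (gen_image n g j)))"
  unfolding sq_rel_def subst_sub subst_smult subst_mult subst_gen[OF assms(1)] subst_gen[OF assms(2)] ..

lemma subst_sq_rel_pair:
  assumes "i < n" "j < n" "x < n" "y < n"
  shows "subst n g (sq_rel q i j) [x, y] = g $$ (x, j) * g $$ (y, i) - q i j * (g $$ (x, i) * g $$ (y, j))"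
  unfolding subst_sq_rel[OF assms(1,2)]
  by (simp add: fa_sub_def fa_smult_def fa_mult_pair gen_image_Nil gen_image_singleton gen_image_pair assms)

lemma subst_sq_rel_in_span:
  assumes Q: "qpm n q" and g: "q_compatible n q g" and ij: "i < n" "j < n"
  shows "subst n g (sq_rel q i j) = (\<lambda>w. \<Sum>p\<in>{..<n}\<times>{..<n}.
    (if fst p < snd p then subst n g (sq_rel q i j) [snd p, fst p] else 0) * sq_rel q (fst p) (snd p) w)"
proof (rule degree_two_in_rel_span)
  let ?X = "subst n g (sq_rel q i j)"
  note g' = q_compatibleD[OF g]
  have "fa_homog n 2 ?X" using subst_homog sq_rel_homog ij by blast
  then show "length w = 2 \<and> set w \<subseteq> {..<n}" if "?X w \<noteq> 0" for w
    using that unfolding fa_homog_def fa_carrier_def by blast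
  have diag: "?X [a, a] = 0" if a: "a < n" for a
  proof -
    have "g $$ (a, i) * g $$ (a, j) * (1 - q i j) = 0"
      using g'[OF a ij(1) a ij(2)] Q a by (cases "g $$ (a, i) = 0 \<or> g $$ (a, j) = 0") (auto simp: qpm_def)
    then show ?thesis unfolding subst_sq_rel_pair[OF ij a a] by (simp add: algebra_simps)
  qed
  have off_diag: "?X [a, b] + q a b * ?X [b, a] = 0" if ab: "a < n" "b < n" "a \<noteq> b" for a b
  proof -
    have "q a b * q b a = 1" using Q ab by (simp add: qpm_def)
    then have "g $$ (a, j) * g $$ (b, i) * (1 - q a b * q i j) = 0"
      using g'[OF ab(2) ij(1) ab(1) ij(2)] by (cases "g $$ (a, j) = 0 \<or> g $$ (b, i) = 0") auto
    moreover have "g $$ (a, i) * g $$ (b, j) * (q a b - q i j) = 0"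
      using g'[OF ab(1) ij(1) ab(2) ij(2)] by (cases "g $$ (a, i) = 0 \<or> g $$ (b, j) = 0") auto
    moreover have "?X [a, b] + q a b * ?X [b, a] = g $$ (a, j) * g $$ (b, i) * (1 - q a b * q i j)
        + g $$ (a, i) * g $$ (b, j) * (q a b - q i j)"
      unfolding subst_sq_rel_pair[OF ij ab(1,2)] subst_sq_rel_pair[OF ij ab(2,1)]
      by (simp add: algebra_simps)
    ultimately show ?thesis by (metis add.right_neutral)
  qed
  show "rel_functional q a b ?X = 0" if "a < n" "b < n" for a b
    using diag off_diag that by (cases "a = b") (simp_all add: rel_functional_def)
qed

lemma subst_sq_ideal:
  assumes Q: "qpm n q" and g: "q_compatible n q g"
  shows "x \<in> sq_ideal n q \<Longrightarrow> subst n g x \<in> sq_ideal n q"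
proof (induction rule: sq_ideal.induct)
  case zero
  then show ?case using sq_ideal.zero by (simp add: subst_zero)
next
  case (add x y)
  then show ?case by (simp add: subst_add sq_ideal.add)
next
  case (gen a b i j)
  have "subst n g (fa_mult (fa_mult a (sq_rel q i j)) b) =
      fa_mult (fa_mult (subst n g a) (subst n g (sq_rel q i j))) (subst n g b)"
    by (simp add: subst_mult)
  also have "\<dots> \<in> sq_ideal n q"
    by (subst subst_sq_rel_in_span[OF Q g gen(3,4)], rule sq_ideal_sandwich)
      (use subst_in_fa_carrier gen in auto)
  finally show ?case .
qed

lemma subst_is_graded_aut:
  fixes q :: "nat \<Rightarrow> nat \<Rightarrow> 'k::field"
  assumes Q: "qpm n q" and g: "g \<in> GL_q n q"
  shows "is_graded_aut n q (subst n g)"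
proof -
  obtain h where h: "h \<in> GL n" "g * h = 1\<^sub>m n" "h * g = 1\<^sub>m n" using GL_inverse[OF GL_q_GL[OF g]] .
  have gc: "g \<in> carrier_mat n n" and hc: "h \<in> carrier_mat n n"
    using GL_carrier GL_q_GL g h(1) by blast+
  have h': "h \<in> GL_q n q" using GL_q_inverse[OF Q g hc h(2,3)] .
  let ?C = "fa_carrier n" and ?I = "sq_ideal n q" and ?p = "subst n g"
  have zero: "fa_sub x x \<in> ?I" for x :: "nat list \<Rightarrow> 'k"
    using sq_ideal.zero by (simp add: fa_sub_self)
  have ideal: "x \<in> ?I \<Longrightarrow> subst n f x \<in> ?I" if "f \<in> GL_q n q" for f x
    using subst_sq_ideal[OF Q] that by (simp add: GL_q_def)
  have inverse: "subst n h (?p x) = x" "?p (subst n h x) = x" if "x \<in> ?C" for x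
    using subst_comp[OF gc hc] subst_comp[OF hc gc] h subst_one_mat[OF that] by simp_all
  have "\<forall>x\<in>?C. \<forall>y\<in>?C. fa_sub (?p x) (?p y) \<in> ?I \<longrightarrow> fa_sub x y \<in> ?I"
    using ideal[OF h'] inverse by (metis subst_sub)
  moreover have "\<forall>y\<in>?C. \<exists>x\<in>?C. fa_sub (?p x) y \<in> ?I"
    using inverse subst_in_fa_carrier zero by metis
  moreover have "\<forall>d x. fa_homog n d x \<longrightarrow> (\<exists>y. fa_homog n d y \<and> fa_sub (?p x) y \<in> ?I)"
    using subst_homog zero by blast
  moreover have "\<forall>x\<in>?C. ?p x \<in> ?C" using subst_in_fa_carrier by blast
  ultimately show ?thesis
    using ideal[OF g] zero
    unfolding is_graded_aut_def Let_def
    by (simp add: subst_sub[symmetric] subst_add subst_smult subst_mult subst_fa_one)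
qed

lemma GL_q_subset_Aut_gr:
  assumes "qpm n q"
  shows "GL_q n q \<subseteq> Aut_gr n q"
proof
  fix g assume g: "g \<in> GL_q n q"
  have "fa_sub (subst n g (fa_gen j)) (\<lambda>w. \<Sum>i<n. g $$ (i, j) * fa_gen i w) \<in> sq_ideal n q" if "j < n" for j
    using sq_ideal.zero that by (simp add: subst_gen gen_image_def fa_sub_self)
  then show "g \<in> Aut_gr n q"
    using subst_is_graded_aut[OF assms g] GL_carrier[OF GL_q_GL[OF g]] unfolding Aut_gr_def by blast
qed

lemma Aut_grE:
  assumes "g \<in> Aut_gr n q"
  obtains \<phi> where "is_graded_aut n q \<phi>" "\<forall>j<n. fa_sub (\<phi> (fa_gen j)) (gen_image n g j) \<in> sq_ideal n q"
    "g \<in> carrier_mat n n"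
  using assms unfolding Aut_gr_def gen_image_def by blast

lemma graded_aut_cong:
  "is_graded_aut n q \<phi> \<Longrightarrow> x \<in> fa_carrier n \<Longrightarrow> y \<in> fa_carrier n \<Longrightarrow> fa_sub x y \<in> sq_ideal n q \<Longrightarrow>
    fa_sub (\<phi> x) (\<phi> y) \<in> sq_ideal n q"
  unfolding is_graded_aut_def Let_def by blast

lemma graded_aut_reflects:
  "is_graded_aut n q \<phi> \<Longrightarrow> x \<in> fa_carrier n \<Longrightarrow> y \<in> fa_carrier n \<Longrightarrow> fa_sub (\<phi> x) (\<phi> y) \<in> sq_ideal n q \<Longrightarrow>
    fa_sub x y \<in> sq_ideal n q"
  unfolding is_graded_aut_def Let_def by blast

lemma graded_aut_add:
  "is_graded_aut n q \<phi> \<Longrightarrow> x \<in> fa_carrier n \<Longrightarrow> y \<in> fa_carrier n \<Longrightarrow>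
    fa_sub (\<phi> (fa_add x y)) (fa_add (\<phi> x) (\<phi> y)) \<in> sq_ideal n q"
  unfolding is_graded_aut_def Let_def by blast

lemma graded_aut_smult:
  "is_graded_aut n q \<phi> \<Longrightarrow> x \<in> fa_carrier n \<Longrightarrow> fa_sub (\<phi> (fa_smult c x)) (fa_smult c (\<phi> x)) \<in> sq_ideal n q"
  unfolding is_graded_aut_def Let_def by blast

lemma graded_aut_mult:
  "is_graded_aut n q \<phi> \<Longrightarrow> x \<in> fa_carrier n \<Longrightarrow> y \<in> fa_carrier n \<Longrightarrow>
    fa_sub (\<phi> (fa_mult x y)) (fa_mult (\<phi> x) (\<phi> y)) \<in> sq_ideal n q"
  unfolding is_graded_aut_def Let_def by blast

lemma graded_aut_zero:
  fixes \<phi> :: "(nat list \<Rightarrow> 'k::field) \<Rightarrow> nat list \<Rightarrow> 'k"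
  assumes "is_graded_aut n q \<phi>"
  shows "\<phi> (\<lambda>w. 0) \<in> sq_ideal n q"
proof -
  have "fa_smult 0 (\<lambda>w. 0) = (\<lambda>w. 0 :: 'k)" "fa_sub X (fa_smult 0 Y) = X" for X Y :: "nat list \<Rightarrow> 'k"
    by (auto simp: fa_smult_def fa_sub_def)
  then show ?thesis using graded_aut_smult[OF assms zero_in_fa_carrier, of 0] by simp
qed

lemma sq_ideal_cong_low_degree:
  assumes Q: "qpm n q" and d: "fa_sub X Y \<in> sq_ideal n q"
  shows "X [] = Y []" "\<And>i. X [i] = Y [i]" "\<And>a b. a < n \<Longrightarrow> b < n \<Longrightarrow> rel_functional q a b X = rel_functional q a b Y"
  using sq_ideal_vanish[OF Q d] by (auto simp: fa_sub_def rel_functional_sub)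

lemma fa_lin_comb_in_fa_carrier:
  "m \<le> n \<Longrightarrow> (\<lambda>w. \<Sum>j<m. c j * fa_gen j w) \<in> fa_carrier n"
proof (induction m)
  case 0
  then show ?case using zero_in_fa_carrier by simp
next
  case (Suc m)
  have "(\<lambda>w. \<Sum>j<Suc m. c j * fa_gen j w) = fa_add (\<lambda>w. \<Sum>j<m. c j * fa_gen j w) (fa_smult (c m) (fa_gen m))"
    by (auto simp: fa_add_def fa_smult_def)
  moreover have "fa_add (\<lambda>w. \<Sum>j<m. c j * fa_gen j w) (fa_smult (c m) (fa_gen m)) \<in> fa_carrier n"
    by (intro fa_add_in_fa_carrier fa_smult_in_fa_carrier fa_gen_in_fa_carrier) (use Suc in auto)
  ultimately show ?case by simp
qed

lemma graded_aut_lin_comb: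
  assumes A: "is_graded_aut n q \<phi>" and gen: "\<forall>j<n. fa_sub (\<phi> (fa_gen j)) (gen_image n g j) \<in> sq_ideal n q"
  shows "m \<le> n \<Longrightarrow>
    fa_sub (\<phi> (\<lambda>w. \<Sum>j<m. c j * fa_gen j w)) (\<lambda>w. \<Sum>j<m. c j * gen_image n g j w) \<in> sq_ideal n q"
proof (induction m)
  case 0
  then show ?case using graded_aut_zero[OF A] by (simp add: fa_sub_zero)
next
  case (Suc m)
  let ?X = "\<lambda>w. \<Sum>j<m. c j * fa_gen j w" and ?T = "\<lambda>w. \<Sum>j<m. c j * gen_image n g j w"
  let ?S = "fa_smult (c m) (fa_gen m)"
  have m: "m < n" using Suc by simp
  have X: "?X \<in> fa_carrier n" using fa_lin_comb_in_fa_carrier[of m n c] Suc.prems by simp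
  have S: "?S \<in> fa_carrier n" using fa_smult_in_fa_carrier fa_gen_in_fa_carrier m by blast
  have XS: "(\<lambda>w. \<Sum>j<Suc m. c j * fa_gen j w) = fa_add ?X ?S"
    by (auto simp: fa_add_def fa_smult_def)
  have "fa_sub (\<phi> (\<lambda>w. \<Sum>j<Suc m. c j * fa_gen j w)) (\<lambda>w. \<Sum>j<Suc m. c j * gen_image n g j w) =
      fa_add (fa_sub (\<phi> (fa_add ?X ?S)) (fa_add (\<phi> ?X) (\<phi> ?S)))
        (fa_add (fa_sub (\<phi> ?X) ?T)
          (fa_add (fa_sub (\<phi> ?S) (fa_smult (c m) (\<phi> (fa_gen m))))
            (fa_smult (c m) (fa_sub (\<phi> (fa_gen m)) (gen_image n g m)))))"
    unfolding XS by (auto simp: fa_sub_def fa_add_def fa_smult_def algebra_simps intro!: ext)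
  also have "\<dots> \<in> sq_ideal n q"
    using graded_aut_add[OF A X S] Suc graded_aut_smult[OF A fa_gen_in_fa_carrier[OF m]]
      sq_ideal_smult[of _ n q "c m"] gen m by (intro sq_ideal.add) auto
  finally show ?case .
qed

text \<open>If g v = 0 then the linear form with coefficients v is mapped into the ideal, hence lies in it,
  and an element of the ideal has no component of degree one.\<close>
lemma Aut_gr_GL:
  fixes q :: "nat \<Rightarrow> nat \<Rightarrow> 'k::field"
  assumes Q: "qpm n q" and g: "g \<in> Aut_gr n q"
  shows "g \<in> GL n"
proof (rule ccontr)
  assume "g \<notin> GL n"
  obtain \<phi> where A: "is_graded_aut n q \<phi>" and gen: "\<forall>j<n. fa_sub (\<phi> (fa_gen j)) (gen_image n g j) \<in> sq_ideal n q"
    and gc: "g \<in> carrier_mat n n"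
    using g by (rule Aut_grE)
  then have "det g = 0" using \<open>g \<notin> GL n\<close> by (simp add: GL_def)
  then obtain v where v: "v \<in> carrier_vec n" "v \<noteq> 0\<^sub>v n" "g *\<^sub>v v = 0\<^sub>v n"
    using det_0_iff_vec_prod_zero[OF gc] by blast
  let ?X = "\<lambda>w. \<Sum>j<n. v $ j * fa_gen j w"
  have "(\<lambda>w. \<Sum>j<n. v $ j * gen_image n g j w) = (\<lambda>w. \<Sum>l<n. (g *\<^sub>v v) $ l * fa_gen l w)"
  proof
    fix w
    have "(\<Sum>j<n. v $ j * gen_image n g j w) = (\<Sum>l<n. (\<Sum>j<n. g $$ (l, j) * v $ j) * fa_gen l w)"
      unfolding gen_image_def sum_distrib_left sum_distrib_right
      by (subst sum.swap) (simp add: ac_simps)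
    also have "\<dots> = (\<Sum>l<n. (g *\<^sub>v v) $ l * fa_gen l w)"
      using gc v(1) by (intro sum.cong refl) (simp add: scalar_prod_def atLeast0LessThan ac_simps)
    finally show "(\<Sum>j<n. v $ j * gen_image n g j w) = (\<Sum>l<n. (g *\<^sub>v v) $ l * fa_gen l w)" .
  qed
  also have "\<dots> = (\<lambda>w. 0)" using v(3) by simp
  finally have "\<phi> ?X \<in> sq_ideal n q"
    using graded_aut_lin_comb[OF A gen, of n "\<lambda>j. v $ j"] by (simp add: fa_sub_zero)
  then have "fa_sub (\<phi> ?X) (\<phi> (\<lambda>w. 0)) \<in> sq_ideal n q"
    using sq_ideal_sub graded_aut_zero[OF A] by blast
  then have "fa_sub ?X (\<lambda>w. 0) \<in> sq_ideal n q"
    using graded_aut_reflects[OF A fa_lin_comb_in_fa_carrier zero_in_fa_carrier] by blast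
  then have X: "?X \<in> sq_ideal n q" by (simp add: fa_sub_zero)
  have "v = 0\<^sub>v n"
  proof (rule eq_vecI)
    fix k assume "k < dim_vec (0\<^sub>v n :: 'k vec)"
    then have k: "k < n" by simp
    have "?X [k] = v $ k" using k by (simp add: fa_gen_def if_distrib cong: if_cong)
    then show "v $ k = 0\<^sub>v n $ k" using k sq_ideal_vanish[OF Q X] by simp
  qed (use v in auto)
  then show False using v by simp
qed

text \<open>The two sides are the values of rel_functional q a b on the images of v_j v_i and of
  q_ij v_i v_j under g, so the equations say that rel_functional q a b kills the image of the
  relation v_j v_i - q_ij v_i v_j.\<close>
definition rel_image_eqs :: "nat \<Rightarrow> (nat \<Rightarrow> nat \<Rightarrow> 'k) \<Rightarrow> 'k::field mat \<Rightarrow> bool" where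
  "rel_image_eqs n q g \<longleftrightarrow> (\<forall>a<n. \<forall>b<n. \<forall>i<n. \<forall>j<n.
     g $$ (a, j) * g $$ (b, i) + (if a = b then 0 else q a b * g $$ (b, j) * g $$ (a, i)) =
     q i j * (g $$ (a, i) * g $$ (b, j) + (if a = b then 0 else q a b * g $$ (b, i) * g $$ (a, j))))"

lemma rel_image_eqsD:
  assumes "rel_image_eqs n q g" "a < n" "b < n" "i < n" "j < n"
  shows "g $$ (a, j) * g $$ (b, i) + (if a = b then 0 else q a b * g $$ (b, j) * g $$ (a, i)) =
     q i j * (g $$ (a, i) * g $$ (b, j) + (if a = b then 0 else q a b * g $$ (b, i) * g $$ (a, j)))"
  using assms unfolding rel_image_eqs_def by blast

lemma graded_aut_rel_functional_gen_mult:
  assumes Q: "qpm n q" and A: "is_graded_aut n q \<phi>"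
    and gen: "\<forall>j<n. fa_sub (\<phi> (fa_gen j)) (gen_image n g j) \<in> sq_ideal n q"
    and idx: "a < n" "b < n" "k < n" "l < n"
  shows "rel_functional q a b (\<phi> (fa_mult (fa_gen k) (fa_gen l))) =
    g $$ (a, k) * g $$ (b, l) + (if a = b then 0 else q a b * g $$ (b, k) * g $$ (a, l))"
proof -
  have gen_low: "\<phi> (fa_gen m) [] = 0" "\<phi> (fa_gen m) [x] = g $$ (x, m)" "rel_functional q a b (\<phi> (fa_gen m)) = 0"
    if "m < n" "x < n" for m x
    using sq_ideal_cong_low_degree[OF Q gen[rule_format, OF that(1)]] idx
    by (simp_all add: gen_image_Nil gen_image_singleton[OF that(2)] rel_functional_gen_image)
  have "rel_functional q a b (\<phi> (fa_mult (fa_gen k) (fa_gen l))) =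
      rel_functional q a b (fa_mult (\<phi> (fa_gen k)) (\<phi> (fa_gen l)))"
    using sq_ideal_cong_low_degree(3)[OF Q graded_aut_mult[OF A] idx(1,2)] fa_gen_in_fa_carrier idx(3,4)
    by blast
  then show ?thesis using gen_low idx by (simp add: rel_functional_mult)
qed

lemma graded_aut_rel_functional_rel:
  assumes Q: "qpm n q" and A: "is_graded_aut n q \<phi>" and idx: "a < n" "b < n" "i < n" "j < n"
  shows "rel_functional q a b (\<phi> (fa_mult (fa_gen j) (fa_gen i))) =
    q i j * rel_functional q a b (\<phi> (fa_mult (fa_gen i) (fa_gen j)))"
proof -
  let ?I = "sq_ideal n q" and ?F = "rel_functional q a b"
  let ?A = "fa_mult (fa_gen j) (fa_gen i)" and ?B = "fa_mult (fa_gen i) (fa_gen j)"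
  let ?S = "fa_smult (- q i j) ?B" and ?r = "sq_rel q i j"
  have AB: "?A \<in> fa_carrier n" "?B \<in> fa_carrier n" "?S \<in> fa_carrier n"
    using fa_mult_gen_gen_in_fa_carrier fa_smult_in_fa_carrier idx by blast+
  have r: "?r = fa_add ?A ?S" unfolding sq_rel_def by (auto simp: fa_sub_def fa_add_def fa_smult_def)
  have "fa_sub (\<phi> ?r) (\<phi> (\<lambda>w. 0)) \<in> ?I"
    using graded_aut_cong[OF A sq_rel_in_fa_carrier[of i n j q] zero_in_fa_carrier]
      sq_rel_in_sq_ideal[of i n j q] idx
    by (simp add: fa_sub_zero)
  then have "?F (\<phi> ?r) = 0"
    using sq_ideal_cong_low_degree(3)[OF Q _ idx(1,2)] sq_ideal_vanish[OF Q graded_aut_zero[OF A]] idx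
    by simp
  moreover have "?F (\<phi> ?r) = ?F (\<phi> ?A) + ?F (\<phi> ?S)"
    using sq_ideal_cong_low_degree(3)[OF Q graded_aut_add[OF A AB(1,3)] idx(1,2)] r
    by (simp add: rel_functional_add)
  moreover have "?F (\<phi> ?S) = - q i j * ?F (\<phi> ?B)"
    using sq_ideal_cong_low_degree(3)[OF Q graded_aut_smult[OF A AB(2)] idx(1,2)]
    by (simp add: rel_functional_smult)
  ultimately show ?thesis by simp
qed

lemma Aut_gr_rel_image_eqs:
  assumes Q: "qpm n q" and g: "g \<in> Aut_gr n q"
  shows "rel_image_eqs n q g"
  unfolding rel_image_eqs_def
proof (intro allI impI)
  fix a b i j assume idx: "a < n" "b < n" "i < n" "j < n"
  obtain \<phi> where A: "is_graded_aut n q \<phi>"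
    and gen: "\<forall>j<n. fa_sub (\<phi> (fa_gen j)) (gen_image n g j) \<in> sq_ideal n q"
    using g by (rule Aut_grE)
  show "g $$ (a, j) * g $$ (b, i) + (if a = b then 0 else q a b * g $$ (b, j) * g $$ (a, i)) =
      q i j * (g $$ (a, i) * g $$ (b, j) + (if a = b then 0 else q a b * g $$ (b, i) * g $$ (a, j)))"
    using graded_aut_rel_functional_rel[OF Q A idx]
      graded_aut_rel_functional_gen_mult[OF Q A gen idx(1,2,4,3)]
      graded_aut_rel_functional_gen_mult[OF Q A gen idx(1,2,3,4)]
    by simp
qed

lemma rel_image_eqs_same_row:
  assumes E: "rel_image_eqs n q g" and idx: "a < n" "i < n" "j < n"
    and nz: "g $$ (a, i) \<noteq> 0" "g $$ (a, j) \<noteq> 0"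
  shows "q i j = 1"
proof -
  have "g $$ (a, j) * g $$ (a, i) = q i j * (g $$ (a, i) * g $$ (a, j))"
    using rel_image_eqsD[OF E idx(1) idx(1) idx(2,3)] by simp
  then have "(g $$ (a, i) * g $$ (a, j)) * (1 - q i j) = 0" by (simp add: algebra_simps)
  then show ?thesis using nz by simp
qed

text \<open>Otherwise rows a and b of g would be proportional, contradicting invertibility.\<close>
lemma rel_image_eqs_same_col:
  assumes g: "g \<in> GL n" and E: "rel_image_eqs n q g"
    and idx: "a < n" "b < n" "i < n" "a \<noteq> b" and nz: "g $$ (a, i) \<noteq> 0" "g $$ (b, i) \<noteq> 0"
  shows "q a b = 1"
proof (rule ccontr)
  assume q_ab: "q a b \<noteq> 1"
  obtain h where h: "h \<in> GL n" "g * h = 1\<^sub>m n" using GL_inverse[OF g] by metis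
  define t where "t = g $$ (b, i) / g $$ (a, i)"
  have row: "g $$ (b, j) = t * g $$ (a, j)" if j: "j < n" for j
  proof -
    have "g $$ (b, j) * g $$ (a, i) = g $$ (a, j) * g $$ (b, i)"
    proof (cases "q i j = 1")
      case True
      then have "(g $$ (a, j) * g $$ (b, i) - g $$ (b, j) * g $$ (a, i)) * (1 - q a b) = 0"
        using rel_image_eqsD[OF E idx(1,2,3) j] idx(4) by (simp add: algebra_simps)
      then show ?thesis using q_ab by simp
    next
      case False
      then have "g $$ (a, j) = 0" "g $$ (b, j) = 0"
        using rel_image_eqs_same_row[OF E idx(1,3) j nz(1)] rel_image_eqs_same_row[OF E idx(2,3) j nz(2)]
        by blast+
      then show ?thesis by simp
    qed
    then show ?thesis using nz unfolding t_def by (simp add: field_simps)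
  qed
  have gc: "g \<in> carrier_mat n n" and hc: "h \<in> carrier_mat n n" using g h(1) by (simp_all add: GL_carrier)
  have "(g * h) $$ (b, b) = (\<Sum>c<n. g $$ (b, c) * h $$ (c, b))" using mat_mult_entry[OF gc hc] idx by simp
  also have "\<dots> = t * (\<Sum>c<n. g $$ (a, c) * h $$ (c, b))" by (simp add: row sum_distrib_left mult.assoc)
  also have "(\<Sum>c<n. g $$ (a, c) * h $$ (c, b)) = (g * h) $$ (a, b)" using mat_mult_entry[OF gc hc] idx by simp
  finally show False using h(2) idx by simp
qed

lemma q_compatible_if_rel_image_eqs:
  assumes Q: "qpm n q" and g: "g \<in> GL n" and E: "rel_image_eqs n q g"
  shows "q_compatible n q g"
  unfolding q_compatible_def
proof (intro allI impI)
  fix a i b j assume idx: "a < n" "i < n" "b < n" "j < n" and nz: "g $$ (a, i) \<noteq> 0" "g $$ (b, j) \<noteq> 0"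
  show "q a b = q i j"
  proof (cases "a = b")
    case True
    then show ?thesis using rel_image_eqs_same_row[OF E idx(1,2,4) nz(1)] Q idx nz by (simp add: qpm_def)
  next
    case False
    show ?thesis
    proof (cases "g $$ (a, j) = 0 \<or> g $$ (b, i) = 0")
      case True
      have "g $$ (a, j) * g $$ (b, i) + q a b * g $$ (b, j) * g $$ (a, i) =
          q i j * (g $$ (a, i) * g $$ (b, j) + q a b * g $$ (b, i) * g $$ (a, j))"
        using rel_image_eqsD[OF E idx(1,3,2,4)] False by simp
      then have "(g $$ (a, i) * g $$ (b, j)) * (q a b - q i j) = 0"
        using True by (auto simp: algebra_simps)
      then show ?thesis using nz by simp
    next
      case False
      then have "q i j = 1" "q a b = 1"
        using rel_image_eqs_same_row[OF E idx(1,2,4) nz(1)] rel_image_eqs_same_col[OF g E idx(1,3,2) \<open>a \<noteq> b\<close> nz(1)]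
        by blast+
      then show ?thesis by simp
    qed
  qed
qed

lemma Aut_gr_eq_GL_q:
  assumes "qpm n q"
  shows "Aut_gr n q = GL_q n q"
  using GL_q_subset_Aut_gr[OF assms] Aut_gr_GL[OF assms] Aut_gr_rel_image_eqs[OF assms]
    q_compatible_if_rel_image_eqs[OF assms]
  by (auto simp: GL_q_def)

theorem corollary2p7:
  fixes q :: "nat \<Rightarrow> nat \<Rightarrow> 'k::field" and n :: nat
  assumes "qpm n q"
  shows "Aut_gr_group n q \<cong> semidirect n q"
proof (rule is_isoI)
  have carrier: "carrier (Aut_gr_group n q) = GL_q n q" "carrier (semidirect n q) = block_prod n q \<times> Stab n q"
    using Aut_gr_eq_GL_q[OF assms] by (simp_all add: Aut_gr_group_def semidirect_def)
  show "decompose n q \<in> iso (Aut_gr_group n q) (semidirect n q)"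
  proof (rule isoI)
    show bij: "bij_betw (decompose n q) (carrier (Aut_gr_group n q)) (carrier (semidirect n q))"
      unfolding carrier using decompose_bij[OF assms] .
    show "decompose n q \<in> hom (Aut_gr_group n q) (semidirect n q)"
      using bij_betw_apply[OF bij] decompose_mult[OF assms] by (intro homI) (simp_all add: carrier Aut_gr_group_def Aut_gr_eq_GL_q[OF assms])
  qed
qed

end
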